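(* Let $(B,\mathfrak{m})$ be a deformation base, $X$ a vector space and $M\subseteq B\widehat{\otimes}X$ a quasi-flat and pseudoclosed $B$-submodule. Let $\varphi:\pi(M)\to M$ be a linear section of the projection $\pi|_M:M\to\pi(M)$. Then the $B$-linear extension $\varphi:B\widehat{\otimes}\pi(M)\to M$ is a $B$-linear isomorphism.
   Context: Deformation base: complete local Noetherian unital $\mathbb{C}$-algebra $B$ with maximal ideal $\mathfrak{m}$, $B/\mathfrak{m}=\mathbb{C}$. $B\widehat{\otimes}X=\varprojlim(B/\mathfrak{m}^k\otimes X)$, $\pi:B\widehat{\otimes}X\to X$ the canonical projection, $\mathfrak{m}X$ the image of $\mathfrak{m}\widehat{\otimes}X$. The $B$-linear extension sends $\sum_ib_iy_i\mapsto\sum_ib_i\varphi(y_i)$. For $Y\subseteq B\widehat{\otimes}X$: $BY=\{\sum_ib_iy_i:y_i\in Y,b_i\in\mathfrak{m}^{k_i},k_i\to\infty\}$, $\mathfrak{m}Y$ the same with $k_i\ge1$. $M$ is pseudoclosed if $BM\subseteq M$, quasi-flat if $M\cap\mathfrak{m}X\subseteq\mathfrak{m}M$. *)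

theory Defs
  imports Complex_Main
begin

definition is_ideal :: "'b::comm_ring_1 set \<Rightarrow> bool" where
  "is_ideal I \<longleftrightarrow> 0 \<in> I \<and> (\<forall>x\<in>I. \<forall>y\<in>I. x + y \<in> I) \<and> (\<forall>r. \<forall>x\<in>I. r * x \<in> I)"

definition ideal_gen :: "'b::comm_ring_1 set \<Rightarrow> 'b set" where
  "ideal_gen S = {x. \<exists>F r. finite F \<and> F \<subseteq> S \<and> x = (\<Sum>f\<in>F. r f * f)}"

fun mpow :: "'b::comm_ring_1 set \<Rightarrow> nat \<Rightarrow> 'b set" where
  "mpow m 0 = UNIV"
| "mpow m (Suc k) = ideal_gen {a * b | a b. a \<in> m \<and> b \<in> mpow m k}"

definition deformation_base :: "(complex \<Rightarrow> 'b::comm_ring_1) \<Rightarrow> 'b set \<Rightarrow> bool" where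
  "deformation_base \<iota> m \<longleftrightarrow>
     \<comment> \<open>unital C-algebra structure\<close>
     \<iota> 1 = 1 \<and> (\<forall>c d. \<iota> (c + d) = \<iota> c + \<iota> d) \<and> (\<forall>c d. \<iota> (c * d) = \<iota> c * \<iota> d)
     \<comment> \<open>local ring with maximal ideal m\<close>
   \<and> is_ideal m \<and> m \<noteq> UNIV \<and> (\<forall>I. is_ideal I \<and> I \<noteq> UNIV \<longrightarrow> I \<subseteq> m)
     \<comment> \<open>residue field B/m = C\<close>
   \<and> (\<forall>b. \<exists>c. b - \<iota> c \<in> m)
     \<comment> \<open>Noetherian\<close>
   \<and> (\<forall>I :: 'b::comm_ring_1 set. is_ideal I \<longrightarrow> (\<exists>F. finite F \<and> I = ideal_gen F))
     \<comment> \<open>complete (and separated) in the m-adic topology\<close>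
   \<and> (\<Inter>k. mpow m k) = {0}
   \<and> (\<forall>x. (\<forall>K. \<exists>N::nat. \<forall>p\<ge>N. \<forall>q\<ge>N. x p - x q \<in> mpow m K)
        \<longrightarrow> (\<exists>y. \<forall>K. \<exists>N::nat. \<forall>p\<ge>N. x p - y \<in> mpow m K))"

text \<open>Continuous dual of B: C-linear functionals vanishing on some m^k.
  It is the direct limit of the duals of the finite-dimensional algebras B/m^k.\<close>
definition Bdual :: "(complex \<Rightarrow> 'b::comm_ring_1) \<Rightarrow> 'b set \<Rightarrow> ('b \<Rightarrow> complex) set" where
  "Bdual \<iota> m = {l. (\<forall>a b. l (a + b) = l a + l b) \<and> (\<forall>c b. l (\<iota> c * b) = c * l b)
                  \<and> (\<exists>k. \<forall>b\<in>mpow m k. l b = 0)}"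

text \<open>Completed tensor product B \<widehat>\<otimes> X = lim (B/m^k \<otimes> X), realised canonically as
  Hom_C(Bdual, X) (since (B/m^k) \<otimes> X = Hom_C((B/m^k)^*, X) and the limit of Homs out of
  a direct system is Hom out of the direct limit).\<close>
definition ctens :: "(complex \<Rightarrow> 'b::comm_ring_1) \<Rightarrow> 'b set \<Rightarrow> (complex \<Rightarrow> 'x::ab_group_add \<Rightarrow> 'x)
     \<Rightarrow> (('b \<Rightarrow> complex) \<Rightarrow> 'x) set" where
  "ctens \<iota> m sc = {T. (\<forall>l\<in>Bdual \<iota> m. \<forall>l'\<in>Bdual \<iota> m. T (\<lambda>b. l b + l' b) = T l + T l')
                    \<and> (\<forall>c. \<forall>l\<in>Bdual \<iota> m. T (\<lambda>b. c * l b) = sc c (T l))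
                    \<and> (\<forall>l. l \<notin> Bdual \<iota> m \<longrightarrow> T l = 0)}"

text \<open>Action of b \<in> B on B \<widehat>\<otimes> X (corresponds to b \<otimes> 1).\<close>
definition Bact :: "(complex \<Rightarrow> 'b::comm_ring_1) \<Rightarrow> 'b set \<Rightarrow> 'b
     \<Rightarrow> (('b \<Rightarrow> complex) \<Rightarrow> 'x::zero) \<Rightarrow> (('b \<Rightarrow> complex) \<Rightarrow> 'x)" where
  "Bact \<iota> m b T = (\<lambda>l. if l \<in> Bdual \<iota> m then T (\<lambda>b'. l (b * b')) else 0)"

text \<open>Canonical map X \<rightarrow> B \<widehat>\<otimes> X, x \<mapsto> 1 \<otimes> x.\<close>
definition emb :: "(complex \<Rightarrow> 'b::comm_ring_1) \<Rightarrow> 'b set \<Rightarrow> (complex \<Rightarrow> 'x::zero \<Rightarrow> 'x)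
     \<Rightarrow> 'x \<Rightarrow> (('b \<Rightarrow> complex) \<Rightarrow> 'x)" where
  "emb \<iota> m sc x = (\<lambda>l. if l \<in> Bdual \<iota> m then sc (l 1) x else 0)"

definition resid :: "(complex \<Rightarrow> 'b::comm_ring_1) \<Rightarrow> 'b set \<Rightarrow> 'b \<Rightarrow> complex" where
  "resid \<iota> m b = (THE c. b - \<iota> c \<in> m)"

definition proj :: "(complex \<Rightarrow> 'b::comm_ring_1) \<Rightarrow> 'b set \<Rightarrow> (('b \<Rightarrow> complex) \<Rightarrow> 'x) \<Rightarrow> 'x" where
  "proj \<iota> m T = T (resid \<iota> m)"

text \<open>The m-adically convergent sum  \<Sum>_i b_i y_i  in B \<widehat>\<otimes> X (evaluated at each functional,
  only finitely many terms are nonzero when b_i \<in> m^{k_i}, k_i \<rightarrow> \<infinity>).\<close>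
definition csum :: "(complex \<Rightarrow> 'b::comm_ring_1) \<Rightarrow> 'b set \<Rightarrow> (nat \<Rightarrow> 'b)
     \<Rightarrow> (nat \<Rightarrow> (('b \<Rightarrow> complex) \<Rightarrow> 'x::comm_monoid_add)) \<Rightarrow> (('b \<Rightarrow> complex) \<Rightarrow> 'x)" where
  "csum \<iota> m b y = (\<lambda>l. if l \<in> Bdual \<iota> m then
        (\<Sum>i\<in>{i. (\<lambda>b'. l (b i * b')) \<noteq> (\<lambda>_. 0)}. y i (\<lambda>b'. l (b i * b'))) else 0)"

definition adm :: "'b::comm_ring_1 set \<Rightarrow> nat \<Rightarrow> (nat \<Rightarrow> 'b) \<Rightarrow> bool" where
  "adm m j b \<longleftrightarrow> (\<exists>k :: nat \<Rightarrow> nat. filterlim k at_top sequentially \<and> (\<forall>i. j \<le> k i \<and> b i \<in> mpow m (k i)))"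

definition BY :: "(complex \<Rightarrow> 'b::comm_ring_1) \<Rightarrow> 'b set \<Rightarrow> (('b \<Rightarrow> complex) \<Rightarrow> 'x::comm_monoid_add) set
     \<Rightarrow> (('b \<Rightarrow> complex) \<Rightarrow> 'x) set" where
  "BY \<iota> m Y = {csum \<iota> m b y | b y. adm m 0 b \<and> (\<forall>i. y i \<in> Y)}"

definition mY :: "(complex \<Rightarrow> 'b::comm_ring_1) \<Rightarrow> 'b set \<Rightarrow> (('b \<Rightarrow> complex) \<Rightarrow> 'x::comm_monoid_add) set
     \<Rightarrow> (('b \<Rightarrow> complex) \<Rightarrow> 'x) set" where
  "mY \<iota> m Y = {csum \<iota> m b y | b y. adm m 1 b \<and> (\<forall>i. y i \<in> Y)}"

definition mX :: "(complex \<Rightarrow> 'b::comm_ring_1) \<Rightarrow> 'b set \<Rightarrow> (complex \<Rightarrow> 'x::comm_monoid_add \<Rightarrow> 'x)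
     \<Rightarrow> (('b \<Rightarrow> complex) \<Rightarrow> 'x) set" where
  "mX \<iota> m sc = mY \<iota> m (range (emb \<iota> m sc))"

definition B_submodule :: "(complex \<Rightarrow> 'b::comm_ring_1) \<Rightarrow> 'b set \<Rightarrow> (complex \<Rightarrow> 'x::ab_group_add \<Rightarrow> 'x)
     \<Rightarrow> (('b \<Rightarrow> complex) \<Rightarrow> 'x) set \<Rightarrow> bool" where
  "B_submodule \<iota> m sc M \<longleftrightarrow> M \<subseteq> ctens \<iota> m sc \<and> (\<lambda>_. 0) \<in> M
     \<and> (\<forall>T\<in>M. \<forall>S\<in>M. (\<lambda>l. T l + S l) \<in> M) \<and> (\<forall>b. \<forall>T\<in>M. Bact \<iota> m b T \<in> M)"

definition pseudoclosed :: "(complex \<Rightarrow> 'b::comm_ring_1) \<Rightarrow> 'b set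
     \<Rightarrow> (('b \<Rightarrow> complex) \<Rightarrow> 'x::comm_monoid_add) set \<Rightarrow> bool" where
  "pseudoclosed \<iota> m M \<longleftrightarrow> BY \<iota> m M \<subseteq> M"

definition quasi_flat :: "(complex \<Rightarrow> 'b::comm_ring_1) \<Rightarrow> 'b set \<Rightarrow> (complex \<Rightarrow> 'x::comm_monoid_add \<Rightarrow> 'x)
     \<Rightarrow> (('b \<Rightarrow> complex) \<Rightarrow> 'x) set \<Rightarrow> bool" where
  "quasi_flat \<iota> m sc M \<longleftrightarrow> M \<inter> mX \<iota> m sc \<subseteq> mY \<iota> m M"

definition ctens_sub :: "(complex \<Rightarrow> 'b::comm_ring_1) \<Rightarrow> 'b set \<Rightarrow> (complex \<Rightarrow> 'x::ab_group_add \<Rightarrow> 'x)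
     \<Rightarrow> 'x set \<Rightarrow> (('b \<Rightarrow> complex) \<Rightarrow> 'x) set" where
  "ctens_sub \<iota> m sc V = {T \<in> ctens \<iota> m sc. \<forall>l. T l \<in> V}"

end

theory Submission
  imports Defs
begin

text \<open>Noetherianity makes every m^K/m^(K+1) finite-dimensional, so by dependent choice there
  are elements E i of B and functionals ES i such that, for every K, the first N K of them span
  B/m^K with coordinates ES i while all later E i lie in m^K. Every T in the completed tensor
  product is then the m-adic sum of the E i \<otimes> T (ES i), which forces the B-linear extension
  to be \<Phi> T = \<Sum> E i \<phi> (T (ES i)). This sum lies in M because M is pseudoclosed, and \<Phi> is
  additive, B-linear and commutes with m-adic sums.

  If \<Phi> U vanishes modulo m^K, then so does U: by induction on K, since the new frame elements
  lie in m^K and \<phi> is the identity modulo m. Hence \<Phi> is injective. For x in M, the difference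
  x - \<phi> (\<pi> x) vanishes modulo m, so by quasi-flatness it is an m-adic combination of elements
  of M; induction on K yields preimages of x modulo every m^K, which agree by injectivity and
  glue to a preimage of x.\<close>

section \<open>Ideals and their powers\<close>

lemma is_ideal_zero: "is_ideal I \<Longrightarrow> 0 \<in> I"
  by (simp add: is_ideal_def)

lemma is_ideal_add: "is_ideal I \<Longrightarrow> x \<in> I \<Longrightarrow> y \<in> I \<Longrightarrow> x + y \<in> I"
  by (simp add: is_ideal_def)

lemma is_ideal_mult_left: "is_ideal I \<Longrightarrow> x \<in> I \<Longrightarrow> r * x \<in> I"
  by (simp add: is_ideal_def)

lemma is_ideal_mult_right: "is_ideal I \<Longrightarrow> x \<in> I \<Longrightarrow> x * r \<in> I"
  by (simp add: is_ideal_def mult.commute)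

lemma is_ideal_diff: "is_ideal I \<Longrightarrow> x \<in> I \<Longrightarrow> y \<in> I \<Longrightarrow> x - y \<in> I"
  using is_ideal_add[of I x "(-1) * y"] is_ideal_mult_left[of I y "-1"] by simp

lemma is_ideal_sum: "is_ideal I \<Longrightarrow> (\<And>a. a \<in> A \<Longrightarrow> f a \<in> I) \<Longrightarrow> sum f A \<in> I"
  by (induction A rule: infinite_finite_induct) (auto simp: is_ideal_def)

lemma is_ideal_ideal_gen: "is_ideal (ideal_gen S)"
  unfolding is_ideal_def
proof (intro conjI ballI allI)
  show "0 \<in> ideal_gen S"
    unfolding ideal_gen_def by (intro CollectI exI[of _ "{}"]) simp
next
  fix x y assume "x \<in> ideal_gen S" "y \<in> ideal_gen S"
  then obtain F r G s where F: "finite F" "F \<subseteq> S" "x = (\<Sum>f\<in>F. r f * f)"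
    and G: "finite G" "G \<subseteq> S" "y = (\<Sum>f\<in>G. s f * f)"
    unfolding ideal_gen_def by blast
  define t where "t f = (if f \<in> F then r f else 0) + (if f \<in> G then s f else 0)" for f
  have "(\<Sum>f\<in>F \<union> G. t f * f) = (\<Sum>f\<in>F \<union> G. if f \<in> F then r f * f else 0)
        + (\<Sum>f\<in>F \<union> G. if f \<in> G then s f * f else 0)"
    by (subst sum.distrib[symmetric], rule sum.cong) (simp_all add: t_def distrib_right)
  also have "\<dots> = x + y"
    using F G by (simp add: sum.inter_restrict[symmetric] Int_absorb2)
  finally show "x + y \<in> ideal_gen S"
    unfolding ideal_gen_def using F G by (intro CollectI exI[of _ "F \<union> G"] exI[of _ t]) auto
next
  fix r x assume "x \<in> ideal_gen S"
  then obtain F s where "finite F" "F \<subseteq> S" "x = (\<Sum>f\<in>F. s f * f)"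
    unfolding ideal_gen_def by blast
  then show "r * x \<in> ideal_gen S"
    unfolding ideal_gen_def
    by (intro CollectI exI[of _ F] exI[of _ "\<lambda>f. r * s f"]) (auto simp: sum_distrib_left mult.assoc)
qed

lemma ideal_gen_base: "s \<in> S \<Longrightarrow> s \<in> ideal_gen S"
  unfolding ideal_gen_def by (intro CollectI exI[of _ "{s}"] exI[of _ "\<lambda>_. 1"]) auto

lemma ideal_gen_minimal: "is_ideal I \<Longrightarrow> S \<subseteq> I \<Longrightarrow> ideal_gen S \<subseteq> I"
  unfolding ideal_gen_def by (auto intro!: is_ideal_sum is_ideal_mult_left)

lemma is_ideal_mpow: "is_ideal (mpow m k)"
  by (cases k) (simp add: is_ideal_def, simp only: mpow.simps is_ideal_ideal_gen)

lemma zero_in_mpow: "0 \<in> mpow m k"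
  by (rule is_ideal_zero[OF is_ideal_mpow])

lemma mpow_Suc_subset: "mpow m (Suc k) \<subseteq> mpow m k"
  unfolding mpow.simps
  by (rule ideal_gen_minimal[OF is_ideal_mpow]) (auto intro: is_ideal_mult_left[OF is_ideal_mpow])

lemma mpow_antimono: "k \<le> k' \<Longrightarrow> mpow m k' \<subseteq> mpow m k"
  by (induction k' rule: dec_induct) (use mpow_Suc_subset in auto)

lemma mpow_Suc_mult: "a \<in> m \<Longrightarrow> b \<in> mpow m k \<Longrightarrow> a * b \<in> mpow m (Suc k)"
  by (auto intro!: ideal_gen_base)

lemma mpow_1: "is_ideal m \<Longrightarrow> mpow m 1 = m"
proof
  show "is_ideal m \<Longrightarrow> mpow m 1 \<subseteq> m"
    by (simp, intro ideal_gen_minimal) (auto intro: is_ideal_mult_right)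
  show "m \<subseteq> mpow m 1"
    using mpow_Suc_mult[of _ m 1 0] by auto
qed

declare mpow.simps(2) [simp del]

lemma adm_eventually_mpow:
  assumes "adm m j b"
  obtains n where "\<And>i. n \<le> i \<Longrightarrow> b i \<in> mpow m K"
proof -
  obtain k where k: "filterlim k at_top sequentially" "\<And>i. b i \<in> mpow m (k i)"
    using assms by (auto simp: adm_def)
  have "eventually (\<lambda>i. K \<le> k i) sequentially"
    using k(1) by (simp add: filterlim_at_top)
  then obtain n where "\<And>i. n \<le> i \<Longrightarrow> K \<le> k i"
    unfolding eventually_sequentially by blast
  then show thesis
    using that k(2) mpow_antimono by blast
qed

lemma adm_mpow: "adm m 0 b \<Longrightarrow> (\<And>i. b i \<in> mpow m j) \<Longrightarrow> adm m j b"
  unfolding adm_def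
proof (elim exE conjE)
  fix k :: "nat \<Rightarrow> nat"
  assume k: "filterlim k at_top sequentially" "\<forall>i. 0 \<le> k i \<and> b i \<in> mpow m (k i)"
    and j: "\<And>i. b i \<in> mpow m j"
  show "\<exists>k. filterlim k at_top sequentially \<and> (\<forall>i. j \<le> k i \<and> b i \<in> mpow m (k i))"
  proof (intro exI[of _ "\<lambda>i. max j (k i)"] conjI allI)
    show "filterlim (\<lambda>i. max j (k i)) at_top sequentially"
      by (rule filterlim_at_top_mono[OF k(1)]) simp
    show "j \<le> max j (k i)" "b i \<in> mpow m (max j (k i))" for i
      using k(2) j by (simp_all add: max_def)
  qed
qed

lemma adm_Suc_0_mem:
  assumes "is_ideal m" "adm m 1 b"
  shows "b i \<in> m"
proof -
  obtain k where "1 \<le> k i" "b i \<in> mpow m (k i)"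
    using assms(2) by (auto simp: adm_def)
  then show ?thesis
    using mpow_antimono[of 1 "k i" m] mpow_1[OF assms(1)] by blast
qed

section \<open>Functionals on the quotients B/m^K\<close>

definition quot_dual :: "(complex \<Rightarrow> 'b::comm_ring_1) \<Rightarrow> 'b set \<Rightarrow> nat \<Rightarrow> ('b \<Rightarrow> complex) set" where
  "quot_dual \<iota> m K = {l \<in> Bdual \<iota> m. \<forall>b\<in>mpow m K. l b = 0}"

definition dual_mult :: "'b::comm_ring_1 \<Rightarrow> ('b \<Rightarrow> complex) \<Rightarrow> 'b \<Rightarrow> complex" where
  "dual_mult a l = (\<lambda>b. l (a * b))"

lemma Bdual_add: "l \<in> Bdual \<iota> m \<Longrightarrow> l (a + b) = l a + l b"
  by (simp add: Bdual_def)

lemma Bdual_scale: "l \<in> Bdual \<iota> m \<Longrightarrow> l (\<iota> c * b) = c * l b"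
  by (simp add: Bdual_def)

lemma Bdual_sum: "l \<in> Bdual \<iota> m \<Longrightarrow> l (sum f A) = (\<Sum>a\<in>A. l (f a))"
  using Bdual_add[of l \<iota> m 0 0]
  by (induction A rule: infinite_finite_induct) (simp_all add: Bdual_add)

lemma quot_dual_iff:
  "l \<in> quot_dual \<iota> m K \<longleftrightarrow> (\<forall>a b. l (a + b) = l a + l b) \<and> (\<forall>c b. l (\<iota> c * b) = c * l b)
     \<and> (\<forall>b\<in>mpow m K. l b = 0)"
  by (auto simp: quot_dual_def Bdual_def)

lemma quot_dual_Bdual: "l \<in> quot_dual \<iota> m K \<Longrightarrow> l \<in> Bdual \<iota> m"
  by (simp add: quot_dual_def)

lemma quot_dual_vanish: "l \<in> quot_dual \<iota> m K \<Longrightarrow> b \<in> mpow m K \<Longrightarrow> l b = 0"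
  by (simp add: quot_dual_def)

lemma quot_dual_mono: "K \<le> K' \<Longrightarrow> l \<in> quot_dual \<iota> m K \<Longrightarrow> l \<in> quot_dual \<iota> m K'"
  using mpow_antimono[of K K' m] by (auto simp: quot_dual_def)

lemma quot_dual_0: "quot_dual \<iota> m 0 = {\<lambda>_. 0}"
  by (auto simp: quot_dual_def Bdual_def)

lemma Bdual_eq_UN_quot_dual: "Bdual \<iota> m = (\<Union>K. quot_dual \<iota> m K)"
  by (auto simp: quot_dual_def Bdual_def)

lemma Bdual_quot_dualE:
  assumes "l \<in> Bdual \<iota> m"
  obtains K where "l \<in> quot_dual \<iota> m K"
  using assms by (auto simp: Bdual_eq_UN_quot_dual)

lemma Bdual_quot_dual2E:
  assumes "l \<in> Bdual \<iota> m" "l' \<in> Bdual \<iota> m"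
  obtains K where "l \<in> quot_dual \<iota> m K" "l' \<in> quot_dual \<iota> m K"
proof -
  obtain K K' where "l \<in> quot_dual \<iota> m K" "l' \<in> quot_dual \<iota> m K'"
    using assms by (meson Bdual_quot_dualE)
  then show thesis
    using that quot_dual_mono[of _ "max K K'"] by (meson max.cobounded1 max.cobounded2)
qed

lemma quot_dual_zero: "(\<lambda>_. 0) \<in> quot_dual \<iota> m K"
  by (simp add: quot_dual_iff)

lemma quot_dual_add:
  "l \<in> quot_dual \<iota> m K \<Longrightarrow> l' \<in> quot_dual \<iota> m K \<Longrightarrow> (\<lambda>b. l b + l' b) \<in> quot_dual \<iota> m K"
  unfolding quot_dual_iff by (auto simp: algebra_simps)

lemma quot_dual_scale: "l \<in> quot_dual \<iota> m K \<Longrightarrow> (\<lambda>b. c * l b) \<in> quot_dual \<iota> m K"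
  unfolding quot_dual_iff by (auto simp: algebra_simps)

lemma quot_dual_dual_mult: "l \<in> quot_dual \<iota> m K \<Longrightarrow> dual_mult a l \<in> quot_dual \<iota> m K"
  unfolding quot_dual_iff dual_mult_def
proof (intro conjI allI ballI)
  assume l: "(\<forall>a b. l (a + b) = l a + l b) \<and> (\<forall>c b. l (\<iota> c * b) = c * l b) \<and> (\<forall>b\<in>mpow m K. l b = 0)"
  fix b b' c
  show "l (a * (b + b')) = l (a * b) + l (a * b')"
    using l by (simp add: distrib_left)
  show "l (a * (\<iota> c * b)) = c * l (a * b)"
    using l by (simp add: mult.left_commute[of a])
  show "b \<in> mpow m K \<Longrightarrow> l (a * b) = 0"
    using l is_ideal_mult_left[OF is_ideal_mpow] by blast
qed

lemma Bdual_zero_fun: "(\<lambda>_. 0) \<in> Bdual \<iota> m"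
  by (simp add: Bdual_def)

lemma Bdual_add_fun: "l \<in> Bdual \<iota> m \<Longrightarrow> l' \<in> Bdual \<iota> m \<Longrightarrow> (\<lambda>b. l b + l' b) \<in> Bdual \<iota> m"
  by (metis Bdual_quot_dual2E quot_dual_Bdual quot_dual_add)

lemma Bdual_scale_fun: "l \<in> Bdual \<iota> m \<Longrightarrow> (\<lambda>b. c * l b) \<in> Bdual \<iota> m"
  by (metis Bdual_quot_dualE quot_dual_Bdual quot_dual_scale)

lemma Bdual_dual_mult: "l \<in> Bdual \<iota> m \<Longrightarrow> dual_mult a l \<in> Bdual \<iota> m"
  by (metis Bdual_quot_dualE quot_dual_Bdual quot_dual_dual_mult)

lemma Bdual_sum_fun: "(\<And>a. a \<in> A \<Longrightarrow> l a \<in> Bdual \<iota> m) \<Longrightarrow> (\<lambda>x. \<Sum>a\<in>A. l a x) \<in> Bdual \<iota> m"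
  by (induction A rule: infinite_finite_induct) (simp_all add: Bdual_zero_fun Bdual_add_fun)

lemma dual_mult_dual_mult: "dual_mult a (dual_mult b l) = dual_mult (b * a) l"
  by (simp add: dual_mult_def mult.assoc)

lemma dual_mult_vanish: "l \<in> quot_dual \<iota> m K \<Longrightarrow> a \<in> mpow m K \<Longrightarrow> dual_mult a l = (\<lambda>_. 0)"
  by (auto simp: dual_mult_def intro!: quot_dual_vanish is_ideal_mult_right[OF is_ideal_mpow])

section \<open>The deformation base\<close>

locale deformation =
  fixes \<iota> :: "complex \<Rightarrow> 'b::comm_ring_1" and m :: "'b set"
  assumes deformation_base: "deformation_base \<iota> m"
begin

lemma iota_add: "\<iota> (c + d) = \<iota> c + \<iota> d"
  using deformation_base by (simp add: deformation_base_def)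

lemma iota_mult: "\<iota> (c * d) = \<iota> c * \<iota> d"
  using deformation_base by (simp add: deformation_base_def)

lemma iota_one: "\<iota> 1 = 1"
  using deformation_base by (simp add: deformation_base_def)

lemma iota_zero: "\<iota> 0 = 0"
  using iota_add[of 0 0] by simp

lemma iota_diff: "\<iota> (c - d) = \<iota> c - \<iota> d"
  using iota_add[of "c - d" d] by (simp add: eq_diff_eq)

lemma is_ideal_m: "is_ideal m"
  using deformation_base by (simp add: deformation_base_def)

lemma one_notin_m: "1 \<notin> m"
proof
  assume "1 \<in> m"
  then have "m = UNIV"
    using is_ideal_mult_right[OF is_ideal_m, of 1] by auto
  then show False
    using deformation_base by (simp add: deformation_base_def)
qed

lemma noetherian:
  fixes I :: "'b set"
  assumes "is_ideal I"
  obtains F where "finite F" "I = ideal_gen F"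
proof -
  have "\<forall>I::'b set. is_ideal I \<longrightarrow> (\<exists>F. finite F \<and> I = ideal_gen F)"
    using deformation_base unfolding deformation_base_def by (elim conjE) assumption
  then show thesis
    using assms that by blast
qed

lemma resid_unique:
  assumes "b - \<iota> c \<in> m" "b - \<iota> d \<in> m"
  shows "c = d"
proof (rule ccontr)
  assume "c \<noteq> d"
  have "\<iota> (d - c) \<in> m"
    using is_ideal_diff[OF is_ideal_m assms] by (simp add: iota_diff)
  then have "\<iota> (1 / (d - c)) * \<iota> (d - c) \<in> m"
    by (rule is_ideal_mult_left[OF is_ideal_m])
  then show False
    using \<open>c \<noteq> d\<close> one_notin_m by (simp add: iota_mult[symmetric] iota_one)
qed

lemma resid: "b - \<iota> (resid \<iota> m b) \<in> m"
proof -
  have "\<forall>b. \<exists>c. b - \<iota> c \<in> m"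
    using deformation_base unfolding deformation_base_def by (elim conjE) assumption
  then show ?thesis
    unfolding resid_def using resid_unique[of b] by (metis theI)
qed

lemma resid_eqI: "b - \<iota> c \<in> m \<Longrightarrow> resid \<iota> m b = c"
  using resid resid_unique by blast

lemma resid_quot_dual_1: "resid \<iota> m \<in> quot_dual \<iota> m 1"
  unfolding quot_dual_iff mpow_1[OF is_ideal_m]
proof (intro conjI allI ballI)
  fix a b c
  show "resid \<iota> m (a + b) = resid \<iota> m a + resid \<iota> m b"
    by (rule resid_eqI) (metis add_diff_add is_ideal_add is_ideal_m iota_add resid)
  show "resid \<iota> m (\<iota> c * b) = c * resid \<iota> m b"
    by (rule resid_eqI) (metis is_ideal_mult_left is_ideal_m iota_mult resid right_diff_distrib)
next
  fix b assume "b \<in> m"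
  then show "resid \<iota> m b = 0"
    by (intro resid_eqI) (simp add: iota_zero)
qed

lemma resid_Bdual: "resid \<iota> m \<in> Bdual \<iota> m"
  using resid_quot_dual_1 by (rule quot_dual_Bdual)

lemma quot_dual_1_eq:
  assumes "l \<in> quot_dual \<iota> m 1"
  shows "l = (\<lambda>b. l 1 * resid \<iota> m b)"
proof
  fix b
  have "l b = l (\<iota> (resid \<iota> m b) * 1) + l (b - \<iota> (resid \<iota> m b))"
    using Bdual_add[OF quot_dual_Bdual[OF assms]] by (metis add_diff_cancel_left' mult.right_neutral
        diff_add_cancel add.commute)
  also have "l (b - \<iota> (resid \<iota> m b)) = 0"
    using quot_dual_vanish[OF assms] resid[of b] mpow_1[OF is_ideal_m] by simp
  also have "l (\<iota> (resid \<iota> m b) * 1) = resid \<iota> m b * l 1"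
    using Bdual_scale[OF quot_dual_Bdual[OF assms]] .
  finally show "l b = l 1 * resid \<iota> m b"
    by (simp add: mult.commute)
qed

lemma dual_mult_quot_dual_Suc:
  assumes "a \<in> m" "l \<in> quot_dual \<iota> m (Suc K)"
  shows "dual_mult a l \<in> quot_dual \<iota> m K"
proof -
  have "l (a * b) = 0" if "b \<in> mpow m K" for b
    using quot_dual_vanish[OF assms(2) mpow_Suc_mult[OF assms(1) that]] .
  then show ?thesis
    using quot_dual_Bdual[OF quot_dual_dual_mult[OF assms(2)]]
    by (simp add: quot_dual_def dual_mult_def)
qed

lemma dual_mult_quot_dual_1:
  assumes "a \<in> mpow m K" "l \<in> quot_dual \<iota> m (Suc K)"
  shows "dual_mult a l \<in> quot_dual \<iota> m 1"
proof -
  have "l (a * b) = 0" if "b \<in> m" for b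
    using quot_dual_vanish[OF assms(2) mpow_Suc_mult[OF that assms(1)]] by (simp add: mult.commute)
  then show ?thesis
    using quot_dual_Bdual[OF quot_dual_dual_mult[OF assms(2)]]
    unfolding quot_dual_def dual_mult_def mpow_1[OF is_ideal_m] by simp
qed

sublocale B: vector_space "\<lambda>c b. \<iota> c * b"
  by unfold_locales (simp_all add: distrib_left distrib_right iota_add iota_mult iota_one mult.assoc)

lemma mpow_subset_span:
  assumes "finite F" "mpow m K = ideal_gen F" "mpow m (Suc K) \<subseteq> B.span S"
  shows "mpow m K \<subseteq> B.span (S \<union> F)"
proof
  fix x assume "x \<in> mpow m K"
  then obtain F' r where F': "F' \<subseteq> F" "x = (\<Sum>f\<in>F'. r f * f)"
    unfolding assms(2) ideal_gen_def by blast
  define c where "c f = resid \<iota> m (r f)" for f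
  have "x = (\<Sum>f\<in>F'. \<iota> (c f) * f) + (\<Sum>f\<in>F'. (r f - \<iota> (c f)) * f)"
    unfolding F'(2) sum.distrib[symmetric] by (rule sum.cong) (simp_all add: algebra_simps)
  moreover have "(\<Sum>f\<in>F'. \<iota> (c f) * f) \<in> B.span (S \<union> F)"
    using F'(1) by (intro B.span_sum B.span_scale B.span_base) auto
  moreover have "(\<Sum>f\<in>F'. (r f - \<iota> (c f)) * f) \<in> B.span (S \<union> F)"
  proof -
    have "f \<in> mpow m K" if "f \<in> F'" for f
      using F'(1) that unfolding assms(2) by (blast intro: ideal_gen_base)
    then have "(\<Sum>f\<in>F'. (r f - \<iota> (c f)) * f) \<in> mpow m (Suc K)"
      unfolding c_def by (intro is_ideal_sum[OF is_ideal_mpow] mpow_Suc_mult[OF resid])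
    then show ?thesis
      using assms(3) B.span_mono[of S "S \<union> F"] by blast
  qed
  ultimately show "x \<in> B.span (S \<union> F)"
    using B.span_add by simp
qed

lemma representation_quot_dual_Suc:
  assumes Basis: "B.independent Basis" "B.span Basis = UNIV"
    and Bm: "Bm \<subseteq> Basis" "B.span Bm = mpow m (Suc K)" and g: "g \<notin> Bm"
  shows "(\<lambda>x. B.representation Basis x g) \<in> quot_dual \<iota> m (Suc K)"
  unfolding quot_dual_iff
proof (intro conjI allI ballI)
  fix a b c
  show "B.representation Basis (a + b) g = B.representation Basis a g + B.representation Basis b g"
    using B.representation_add[OF Basis(1), of b a] Basis(2) by simp
  show "B.representation Basis (\<iota> c * b) g = c * B.representation Basis b g"
    using B.representation_scale[OF Basis(1), of b c] Basis(2) by simp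
next
  fix b assume "b \<in> mpow m (Suc K)"
  then have "B.representation Basis b = B.representation Bm b"
    using B.representation_extend[OF Basis(1) _ Bm(1)] Bm(2) by blast
  then show "B.representation Basis b g = 0"
    using B.representation_ne_zero[of Bm b g] g by auto
qed

lemma representation_diff_in_span:
  assumes Basis: "B.independent Basis" "Bas \<subseteq> Basis" and Bm: "Bm \<subseteq> Bas" "finite (Bas - Bm)"
    and x: "x \<in> B.span Bas"
  shows "x - (\<Sum>g\<in>Bas - Bm. \<iota> (B.representation Basis x g) * g) \<in> B.span Bm"
proof -
  have Bas: "B.independent Bas"
    using Basis B.dependent_mono by blast
  define R where "R = B.representation Bas x"
  define supp where "supp = {b. R b \<noteq> 0}"
  have supp: "finite supp" "supp \<subseteq> Bas" "x = (\<Sum>b\<in>supp. \<iota> (R b) * b)"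
    unfolding supp_def R_def using B.finite_representation B.representation_ne_zero
      B.sum_nonzero_representation_eq[OF Bas x] by auto
  have "(\<Sum>g\<in>Bas - Bm. \<iota> (B.representation Basis x g) * g) = (\<Sum>b\<in>supp \<inter> (Bas - Bm). \<iota> (R b) * b)"
    unfolding R_def B.representation_extend[OF Basis(1) x Basis(2)]
    using Bm(2) unfolding supp_def R_def
    by (intro sum.mono_neutral_right) (auto simp: iota_zero)
  then have "x - (\<Sum>g\<in>Bas - Bm. \<iota> (B.representation Basis x g) * g) = (\<Sum>b\<in>supp - (Bas - Bm). \<iota> (R b) * b)"
    using sum.Int_Diff[OF supp(1), of "\<lambda>b. \<iota> (R b) * b" "Bas - Bm"] supp(3) by simp
  also have "\<dots> \<in> B.span Bm"
    using supp(2) by (intro B.span_sum B.span_scale B.span_base) auto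
  finally show ?thesis .
qed

lemma layer_coordinates:
  obtains G f where "finite G" "G \<subseteq> mpow m K" "\<And>g. g \<in> G \<Longrightarrow> f g \<in> quot_dual \<iota> m (Suc K)"
    "\<And>x. x \<in> mpow m K \<Longrightarrow> x - (\<Sum>g\<in>G. \<iota> (f g x) * g) \<in> mpow m (Suc K)"
proof -
  obtain F where F: "finite F" "mpow m K = ideal_gen F"
    using noetherian[OF is_ideal_mpow] by blast
  have "B.subspace (mpow m (Suc K))"
    unfolding B.subspace_def
    by (intro conjI ballI allI is_ideal_zero[OF is_ideal_mpow] is_ideal_add[OF is_ideal_mpow]
        is_ideal_mult_left[OF is_ideal_mpow])
  obtain Bm where Bm: "Bm \<subseteq> mpow m (Suc K)" "B.independent Bm" "mpow m (Suc K) \<subseteq> B.span Bm"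
    by (rule B.maximal_independent_subset_extend[OF empty_subsetI B.independent_empty]) blast
  then have span_Bm: "B.span Bm = mpow m (Suc K)"
    using B.span_minimal[OF Bm(1) \<open>B.subspace _\<close>] by blast
  obtain Bas where Bas: "Bm \<subseteq> Bas" "Bas \<subseteq> Bm \<union> F" "B.independent Bas" "Bm \<union> F \<subseteq> B.span Bas"
    by (rule B.maximal_independent_subset_extend[OF Un_upper1 Bm(2)])
  obtain Basis where Basis: "Bas \<subseteq> Basis" "B.independent Basis" "UNIV \<subseteq> B.span Basis"
    by (rule B.maximal_independent_subset_extend[OF subset_UNIV Bas(3)]) blast
  have G: "finite (Bas - Bm)" "Bas - Bm \<subseteq> mpow m K"
    using Bas(2) F by (auto intro: finite_subset ideal_gen_base)
  show thesis
  proof (rule that[OF G])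
    show "(\<lambda>x. B.representation Basis x g) \<in> quot_dual \<iota> m (Suc K)" if "g \<in> Bas - Bm" for g
      using that Basis Bas(1) span_Bm by (intro representation_quot_dual_Suc) auto
    have "mpow m K \<subseteq> B.span Bas"
      using mpow_subset_span[OF F Bm(3)] B.span_minimal[OF Bas(4) B.subspace_span] by blast
    then show "x - (\<Sum>g\<in>Bas - Bm. \<iota> (B.representation Basis x g) * g) \<in> mpow m (Suc K)"
      if "x \<in> mpow m K" for x
      using representation_diff_in_span[OF Basis(2,1) Bas(1) G(1)] that span_Bm by blast
  qed
qed

end

section \<open>Adic frames\<close>

definition quot_frame :: "(complex \<Rightarrow> 'b::comm_ring_1) \<Rightarrow> 'b set \<Rightarrow> nat \<Rightarrow> ('b \<times> ('b \<Rightarrow> complex)) list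
     \<Rightarrow> bool" where
  "quot_frame \<iota> m K ps \<longleftrightarrow> (\<forall>p\<in>set ps. snd p \<in> quot_dual \<iota> m K)
     \<and> (\<forall>b. b - (\<Sum>p\<leftarrow>ps. \<iota> (snd p b) * fst p) \<in> mpow m K)"

definition adic_frame :: "(complex \<Rightarrow> 'b::comm_ring_1) \<Rightarrow> 'b set \<Rightarrow> (nat \<Rightarrow> 'b) \<Rightarrow> (nat \<Rightarrow> 'b \<Rightarrow> complex)
     \<Rightarrow> (nat \<Rightarrow> nat) \<Rightarrow> bool" where
  "adic_frame \<iota> m E ES N \<longleftrightarrow> (\<forall>K i. i < N K \<longrightarrow> ES i \<in> quot_dual \<iota> m K)
     \<and> (\<forall>K i. N K \<le> i \<longrightarrow> E i \<in> mpow m K)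
     \<and> (\<forall>K b. b - (\<Sum>i<N K. \<iota> (ES i b) * E i) \<in> mpow m K)"

lemma append_chain_suffix:
  assumes grow: "\<And>K. \<exists>qs. ps (Suc K) = ps K @ qs \<and> (\<forall>p\<in>set qs. fst p \<in> mpow m K)"
    and "K \<le> K'"
  shows "\<exists>zs. ps K' = ps K @ zs \<and> (\<forall>p\<in>set zs. fst p \<in> mpow m K)"
  using \<open>K \<le> K'\<close>
proof (induction K' rule: dec_induct)
  case (step K')
  then show ?case
    using grow[of K'] mpow_antimono[OF step(1)] by fastforce
qed simp

lemma adic_frame_limit:
  fixes ps :: "nat \<Rightarrow> ('b::comm_ring_1 \<times> ('b \<Rightarrow> complex)) list"
  assumes frame: "\<And>K. quot_frame \<iota> m K (ps K)" and long: "\<And>K. K \<le> length (ps K)"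
    and grow: "\<And>K. \<exists>qs. ps (Suc K) = ps K @ qs \<and> (\<forall>p\<in>set qs. fst p \<in> mpow m K)"
  shows "adic_frame \<iota> m (\<lambda>i. fst (ps (Suc i) ! i)) (\<lambda>i. snd (ps (Suc i) ! i)) (\<lambda>K. length (ps K))"
proof -
  note prefix = append_chain_suffix[OF grow]
  have ps_nth: "ps K ! i = ps (Suc i) ! i" if "i < length (ps K)" for K i
    using that long[of "Suc i"] prefix[of K "Suc i"] prefix[of "Suc i" K]
    by (cases "K \<le> Suc i") (auto simp: nth_append)
  have "snd (ps (Suc i) ! i) \<in> quot_dual \<iota> m K" if "i < length (ps K)" for K i
    using frame[of K] nth_mem[OF that] ps_nth[OF that] by (simp add: quot_frame_def)
  moreover have "fst (ps (Suc i) ! i) \<in> mpow m K" if "length (ps K) \<le> i" for K i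
  proof -
    define K' where "K' = max K (Suc i)"
    obtain zs where zs: "ps K' = ps K @ zs" "\<forall>p\<in>set zs. fst p \<in> mpow m K"
      using prefix[of K K'] by (auto simp: K'_def)
    have "i < length (ps K')"
      using long[of K'] by (simp add: K'_def)
    then have "ps K' ! i \<in> set zs"
      using that zs(1) by (simp add: nth_append)
    then show ?thesis
      using zs(2) ps_nth[OF \<open>i < length (ps K')\<close>] by simp
  qed
  moreover have "b - (\<Sum>i<length (ps K). \<iota> (snd (ps (Suc i) ! i) b) * fst (ps (Suc i) ! i)) \<in> mpow m K"
    for K b
  proof -
    have "(\<Sum>p\<leftarrow>ps K. \<iota> (snd p b) * fst p) = (\<Sum>i<length (ps K). \<iota> (snd (ps K ! i) b) * fst (ps K ! i))"
      unfolding sum_list_sum_nth atLeast0LessThan length_map by (intro sum.cong refl) simp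
    also have "\<dots> = (\<Sum>i<length (ps K). \<iota> (snd (ps (Suc i) ! i) b) * fst (ps (Suc i) ! i))"
      by (intro sum.cong refl) (metis lessThan_iff ps_nth)
    finally have "(\<Sum>p\<leftarrow>ps K. \<iota> (snd p b) * fst p)
        = (\<Sum>i<length (ps K). \<iota> (snd (ps (Suc i) ! i) b) * fst (ps (Suc i) ! i))" .
    moreover have "b - (\<Sum>p\<leftarrow>ps K. \<iota> (snd p b) * fst p) \<in> mpow m K"
      using frame[of K] by (simp add: quot_frame_def)
    ultimately show ?thesis
      by simp
  qed
  ultimately show ?thesis
    unfolding adic_frame_def by blast
qed

context deformation
begin

lemma quot_dual_comp_frame_residual:
  assumes ps: "quot_frame \<iota> m K ps" and f: "f \<in> quot_dual \<iota> m (Suc K)"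
  shows "(\<lambda>b. f (b - (\<Sum>p\<leftarrow>ps. \<iota> (snd p b) * fst p))) \<in> quot_dual \<iota> m (Suc K)"
proof -
  have ps_dual: "snd p \<in> Bdual \<iota> m" if "p \<in> set ps" for p
    using ps that unfolding quot_frame_def by (blast intro: quot_dual_Bdual)
  define r where "r b = b - (\<Sum>p\<leftarrow>ps. \<iota> (snd p b) * fst p)" for b
  have "(\<Sum>p\<leftarrow>ps. \<iota> (snd p (a + b)) * fst p)
      = (\<Sum>p\<leftarrow>ps. \<iota> (snd p a) * fst p + \<iota> (snd p b) * fst p)" for a b
    by (rule arg_cong[where f=sum_list], rule map_cong[OF refl])
      (simp add: Bdual_add[OF ps_dual] iota_add distrib_right)
  then have r_add: "r (a + b) = r a + r b" for a b
    unfolding r_def sum_list_addf by simp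
  have "(\<Sum>p\<leftarrow>ps. \<iota> (snd p (\<iota> c * b)) * fst p) = (\<Sum>p\<leftarrow>ps. \<iota> c * (\<iota> (snd p b) * fst p))" for c b
    by (rule arg_cong[where f=sum_list], rule map_cong[OF refl]) (simp add: Bdual_scale[OF ps_dual])
  then have r_scale: "r (\<iota> c * b) = \<iota> c * r b" for c b
    unfolding r_def sum_list_const_mult by (simp add: right_diff_distrib)
  have r_fix: "r b = b" if "b \<in> mpow m (Suc K)" for b
  proof -
    have "snd p b = 0" if "p \<in> set ps" for p
      using ps \<open>p \<in> set ps\<close> subsetD[OF mpow_Suc_subset \<open>b \<in> mpow m (Suc K)\<close>]
      unfolding quot_frame_def by (blast intro: quot_dual_vanish)
    then have "(\<Sum>p\<leftarrow>ps. \<iota> (snd p b) * fst p) = (\<Sum>p\<leftarrow>ps. 0)"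
      by (intro arg_cong[where f=sum_list] map_cong[OF refl]) (simp add: iota_zero)
    then show ?thesis
      by (simp add: r_def)
  qed
  show ?thesis
    unfolding quot_dual_iff r_def[symmetric]
    using Bdual_add[OF quot_dual_Bdual[OF f]] Bdual_scale[OF quot_dual_Bdual[OF f]] quot_dual_vanish[OF f]
    by (simp add: r_add r_scale r_fix)
qed

lemma quot_frame_extend:
  assumes ps: "quot_frame \<iota> m K ps"
  obtains qs where "qs \<noteq> []" "\<forall>p\<in>set qs. fst p \<in> mpow m K" "quot_frame \<iota> m (Suc K) (ps @ qs)"
proof -
  define r where "r b = b - (\<Sum>p\<leftarrow>ps. \<iota> (snd p b) * fst p)" for b
  obtain G f where G: "finite G" "G \<subseteq> mpow m K" "\<And>g. g \<in> G \<Longrightarrow> f g \<in> quot_dual \<iota> m (Suc K)"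
    "\<And>x. x \<in> mpow m K \<Longrightarrow> x - (\<Sum>g\<in>G. \<iota> (f g x) * g) \<in> mpow m (Suc K)"
    using layer_coordinates[of K] by blast
  obtain gs where gs: "set gs = G" "distinct gs"
    using finite_distinct_list[OF G(1)] by blast
  define qs where "qs = map (\<lambda>g. (g, \<lambda>b. f g (r b))) gs @ [(0, \<lambda>_. 0)]"
    \<comment> \<open>the zero pair only makes every stage strictly longer\<close>
  show thesis
  proof
    show "qs \<noteq> []" "\<forall>p\<in>set qs. fst p \<in> mpow m K"
      using G(2) gs(1) by (auto simp: qs_def zero_in_mpow)
    have "snd p \<in> quot_dual \<iota> m (Suc K)" if "p \<in> set ps" for p
      using ps that unfolding quot_frame_def by (blast intro: quot_dual_mono[OF le_SucI[OF order_refl]])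
    then have "\<forall>p\<in>set (ps @ qs). snd p \<in> quot_dual \<iota> m (Suc K)"
      using quot_dual_comp_frame_residual[OF ps G(3)] gs(1)
      by (auto simp: qs_def quot_dual_zero r_def)
    moreover have "b - (\<Sum>p\<leftarrow>ps @ qs. \<iota> (snd p b) * fst p) = r b - (\<Sum>g\<in>G. \<iota> (f g (r b)) * g)" for b
      using sum_list_distinct_conv_sum_set[OF gs(2)] gs(1) by (simp add: qs_def o_def r_def)
    moreover have "r b \<in> mpow m K" for b
      using ps by (simp add: quot_frame_def r_def)
    ultimately show "quot_frame \<iota> m (Suc K) (ps @ qs)"
      using G(4) by (simp add: quot_frame_def)
  qed
qed

lemma quot_frame_chain_exists:
  obtains ps where "\<And>K. quot_frame \<iota> m K (ps K)" "\<And>K. K \<le> length (ps K)"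
    "\<And>K. \<exists>qs. ps (Suc K) = ps K @ qs \<and> (\<forall>p\<in>set qs. fst p \<in> mpow m K)"
proof -
  have "\<exists>ps. \<forall>K. (quot_frame \<iota> m K (ps K) \<and> K \<le> length (ps K))
      \<and> (\<exists>qs. ps (Suc K) = ps K @ qs \<and> (\<forall>p\<in>set qs. fst p \<in> mpow m K))"
  proof (rule dependent_nat_choice)
    show "\<exists>ps. quot_frame \<iota> m 0 ps \<and> 0 \<le> length ps"
      by (intro exI[of _ "[]"]) (simp add: quot_frame_def)
  next
    fix ps K assume ps: "quot_frame \<iota> m K ps \<and> K \<le> length ps"
    then obtain qs where "qs \<noteq> []" "\<forall>p\<in>set qs. fst p \<in> mpow m K" "quot_frame \<iota> m (Suc K) (ps @ qs)"
      by (meson quot_frame_extend)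
    moreover have "Suc K \<le> length (ps @ qs)"
      using ps \<open>qs \<noteq> []\<close> by (cases qs) simp_all
    ultimately show "\<exists>ps'. (quot_frame \<iota> m (Suc K) ps' \<and> Suc K \<le> length ps')
        \<and> (\<exists>qs. ps' = ps @ qs \<and> (\<forall>p\<in>set qs. fst p \<in> mpow m K))"
      by blast
  qed
  then show thesis
    using that by blast
qed

lemma adic_frame_exists: "\<exists>E ES N. adic_frame \<iota> m E ES N"
proof -
  obtain ps where "\<And>K. quot_frame \<iota> m K (ps K)" "\<And>K. K \<le> length (ps K)"
    "\<And>K. \<exists>qs. ps (Suc K) = ps K @ qs \<and> (\<forall>p\<in>set qs. fst p \<in> mpow m K)"
    using quot_frame_chain_exists by blast
  from adic_frame_limit[where ps=ps, OF this] show ?thesis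
    by blast
qed

end

locale framed_deformation = deformation +
  fixes E ES N
  assumes adic_frame: "adic_frame \<iota> m E ES N"
begin

lemma frame_ES: "i < N K \<Longrightarrow> ES i \<in> quot_dual \<iota> m K"
  using adic_frame by (simp add: adic_frame_def)

lemma frame_E: "N K \<le> i \<Longrightarrow> E i \<in> mpow m K"
  using adic_frame by (simp add: adic_frame_def)

lemma frame_span: "b - (\<Sum>i<N K. \<iota> (ES i b) * E i) \<in> mpow m K"
  using adic_frame by (simp add: adic_frame_def)

lemma quot_dual_frame_expansion:
  assumes l: "l \<in> quot_dual \<iota> m K"
  shows "l (b * c) = (\<Sum>i<N K. ES i b * l (E i * c))"
proof -
  define s where "s = (\<Sum>i<N K. \<iota> (ES i b) * E i)"
  have "l (b * c) = l (s * c) + l ((b - s) * c)"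
    using Bdual_add[OF quot_dual_Bdual[OF l], of "s * c" "(b - s) * c"] by (simp add: algebra_simps)
  also have "l ((b - s) * c) = 0"
    unfolding s_def by (rule quot_dual_vanish[OF l is_ideal_mult_right[OF is_ideal_mpow frame_span]])
  also have "l (s * c) = (\<Sum>i<N K. ES i b * l (E i * c))"
    unfolding s_def sum_distrib_right Bdual_sum[OF quot_dual_Bdual[OF l]] mult.assoc
    by (simp add: Bdual_scale[OF quot_dual_Bdual[OF l]])
  finally show ?thesis
    by simp
qed

lemma quot_dual_frame_expansion_1:
  assumes "l \<in> quot_dual \<iota> m K"
  shows "l = (\<lambda>b. \<Sum>i<N K. l (E i) * ES i b)"
proof
  fix b
  have "l b = (\<Sum>i<N K. ES i b * l (E i))"
    using quot_dual_frame_expansion[OF assms, of b 1] by simp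
  then show "l b = (\<Sum>i<N K. l (E i) * ES i b)"
    by (simp only: mult.commute)
qed

lemma adm_frame: "adm m 0 E"
proof -
  define k where "k i = Max {K. K \<le> i \<and> (K = 0 \<or> N K \<le> i)}" for i
  have fin: "finite {K. K \<le> i \<and> (K = 0 \<or> N K \<le> i)}" for i
    by (rule finite_subset[of _ "{..i}"]) auto
  have k_mem: "k i \<le> i \<and> (k i = 0 \<or> N (k i) \<le> i)" for i
    using Max_in[OF fin, of i] unfolding k_def by blast
  have "filterlim k at_top sequentially"
    unfolding filterlim_at_top eventually_sequentially
  proof (intro allI exI[of _ "max _ (N _)"] allI impI)
    fix Z i assume "max Z (N Z) \<le> i"
    then show "Z \<le> k i"
      unfolding k_def using fin by (intro Max_ge) auto
  qed
  moreover have "E i \<in> mpow m (k i)" for i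
    using k_mem[of i] frame_E by auto
  ultimately show ?thesis
    unfolding adm_def by blast
qed

lemma adm_frame_tail: "adm m 1 (\<lambda>i. if i < N 1 then 0 else E i)"
proof (rule adm_mpow)
  obtain k where "filterlim k at_top sequentially" "\<And>i. E i \<in> mpow m (k i)"
    using adm_frame by (auto simp: adm_def)
  then show "adm m 0 (\<lambda>i. if i < N 1 then 0 else E i)"
    unfolding adm_def by (intro exI[of _ k]) (simp add: zero_in_mpow)
  show "(if i < N 1 then 0 else E i) \<in> mpow m 1" for i
    using frame_E[of 1 i] by (auto simp: zero_in_mpow)
qed
end

section \<open>Convergent sums in the completed tensor product\<close>

lemma csum_outside: "l \<notin> Bdual \<iota> m \<Longrightarrow> csum \<iota> m b y l = 0"
  by (simp add: csum_def)

lemma csum_zero_fun: "csum \<iota> m b y (\<lambda>_. 0) = 0"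
  by (simp add: csum_def Bdual_zero_fun)

lemma csum_eq_sum:
  assumes "l \<in> Bdual \<iota> m" "finite S" "\<And>i. i \<notin> S \<Longrightarrow> dual_mult (b i) l = (\<lambda>_. 0)"
    and "\<And>i. y i (\<lambda>_. 0) = 0"
  shows "csum \<iota> m b y l = (\<Sum>i\<in>S. y i (dual_mult (b i) l))"
proof -
  have "{i. dual_mult (b i) l \<noteq> (\<lambda>_. 0)} \<subseteq> S"
    using assms(3) by blast
  then have "(\<Sum>i\<in>{i. dual_mult (b i) l \<noteq> (\<lambda>_. 0)}. y i (dual_mult (b i) l))
      = (\<Sum>i\<in>S. y i (dual_mult (b i) l))"
    by (intro sum.mono_neutral_left[OF assms(2)]) (auto simp: assms(4))
  then show ?thesis
    using assms(1) by (simp add: csum_def dual_mult_def)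
qed

lemma csum_eq_sum_lessThan:
  assumes "l \<in> quot_dual \<iota> m K" "\<And>i. n \<le> i \<Longrightarrow> b i \<in> mpow m K" "\<And>i. y i (\<lambda>_. 0) = 0"
  shows "csum \<iota> m b y l = (\<Sum>i<n. y i (dual_mult (b i) l))"
  using assms by (intro csum_eq_sum quot_dual_Bdual) (auto intro: dual_mult_vanish)

lemma adm_csum_eq_sum:
  assumes "adm m j b" "\<And>i. y i (\<lambda>_. 0) = 0"
  obtains n where "\<And>l. l \<in> quot_dual \<iota> m K \<Longrightarrow> csum \<iota> m b y l = (\<Sum>i<n. y i (dual_mult (b i) l))"
proof -
  obtain n where n: "\<And>i. n \<le> i \<Longrightarrow> b i \<in> mpow m K"
    using adm_eventually_mpow[OF assms(1)] by blast
  show thesis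
  proof (rule that)
    fix l assume "l \<in> quot_dual \<iota> m K"
    then show "csum \<iota> m b y l = (\<Sum>i<n. y i (dual_mult (b i) l))"
      by (rule csum_eq_sum_lessThan) (simp_all add: n assms(2))
  qed
qed

lemma (in deformation) csum_eq_on_quot_dual_Suc:
  assumes b: "\<And>i. b i \<in> m" and l: "l \<in> quot_dual \<iota> m (Suc K)" and adm: "adm m j b"
    and yz: "\<And>i l. l \<in> quot_dual \<iota> m K \<Longrightarrow> y i l = z i l"
    and y0: "\<And>i. y i (\<lambda>_. 0) = 0" and z0: "\<And>i. z i (\<lambda>_. 0) = 0"
  shows "csum \<iota> m b y l = csum \<iota> m b z l"
proof -
  obtain n where n: "\<And>i. n \<le> i \<Longrightarrow> b i \<in> mpow m (Suc K)"
    using adm_eventually_mpow[OF adm] by blast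
  have "csum \<iota> m b y l = (\<Sum>i<n. y i (dual_mult (b i) l))"
    by (rule csum_eq_sum_lessThan[OF l]) (simp_all add: n y0)
  also have "\<dots> = (\<Sum>i<n. z i (dual_mult (b i) l))"
    using yz[OF dual_mult_quot_dual_Suc[OF b l]] by simp
  also have "\<dots> = csum \<iota> m b z l"
    by (rule csum_eq_sum_lessThan[OF l, symmetric]) (simp_all add: n z0)
  finally show ?thesis .
qed

locale coefficient_space = X: vector_space sc for sc :: "complex \<Rightarrow> 'x::ab_group_add \<Rightarrow> 'x"
begin

lemma ctens_add:
  "T \<in> ctens \<iota> m sc \<Longrightarrow> l \<in> Bdual \<iota> m \<Longrightarrow> l' \<in> Bdual \<iota> m \<Longrightarrow> T (\<lambda>b. l b + l' b) = T l + T l'"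
  by (simp add: ctens_def)

lemma ctens_scale: "T \<in> ctens \<iota> m sc \<Longrightarrow> l \<in> Bdual \<iota> m \<Longrightarrow> T (\<lambda>b. c * l b) = sc c (T l)"
  by (simp add: ctens_def)

lemma ctens_outside: "T \<in> ctens \<iota> m sc \<Longrightarrow> l \<notin> Bdual \<iota> m \<Longrightarrow> T l = 0"
  by (simp add: ctens_def)

lemma ctens_zero: "T \<in> ctens \<iota> m sc \<Longrightarrow> T (\<lambda>_. 0) = 0"
  using ctens_scale[OF _ Bdual_zero_fun, of T \<iota> m 0] by simp

lemma ctens_sum:
  assumes "T \<in> ctens \<iota> m sc" "\<And>a. a \<in> A \<Longrightarrow> l a \<in> Bdual \<iota> m"
  shows "T (\<lambda>x. \<Sum>a\<in>A. c a * l a x) = (\<Sum>a\<in>A. sc (c a) (T (l a)))"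
  using assms(2)
proof (induction A rule: infinite_finite_induct)
  case (insert a A)
  have "(\<lambda>x. \<Sum>a\<in>A. c a * l a x) \<in> Bdual \<iota> m"
    using insert.prems by (intro Bdual_sum_fun Bdual_scale_fun) simp
  then show ?case
    using insert ctens_add[OF assms(1) Bdual_scale_fun] ctens_scale[OF assms(1)] by simp
qed (simp_all add: ctens_zero[OF assms(1)])

lemma emb_ctens: "emb \<iota> m sc y \<in> ctens \<iota> m sc"
  by (auto simp: ctens_def emb_def X.scale_left_distrib Bdual_add_fun Bdual_scale_fun)

lemma ctens_sub_ctens: "T \<in> ctens_sub \<iota> m sc V \<Longrightarrow> T \<in> ctens \<iota> m sc"
  by (simp add: ctens_sub_def)

lemma ctens_sub_range: "T \<in> ctens_sub \<iota> m sc V \<Longrightarrow> T l \<in> V"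
  by (simp add: ctens_sub_def)

lemma ctens_sub_zero: "0 \<in> V \<Longrightarrow> (\<lambda>_. 0) \<in> ctens_sub \<iota> m sc V"
  by (simp add: ctens_sub_def ctens_def)

lemma emb_ctens_sub: "X.subspace V \<Longrightarrow> y \<in> V \<Longrightarrow> emb \<iota> m sc y \<in> ctens_sub \<iota> m sc V"
  using emb_ctens by (auto simp: ctens_sub_def emb_def X.subspace_scale X.subspace_0)

lemma ctens_sub_add:
  assumes "X.subspace V" "T \<in> ctens_sub \<iota> m sc V" "S \<in> ctens_sub \<iota> m sc V"
  shows "(\<lambda>l. T l + S l) \<in> ctens_sub \<iota> m sc V"
  using assms by (auto simp: ctens_sub_def ctens_def X.scale_right_distrib X.subspace_add)

lemma ctens_sub_diff:
  assumes "X.subspace V" "T \<in> ctens_sub \<iota> m sc V" "S \<in> ctens_sub \<iota> m sc V"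
  shows "(\<lambda>l. T l - S l) \<in> ctens_sub \<iota> m sc V"
  using assms by (auto simp: ctens_sub_def ctens_def X.scale_right_diff_distrib X.subspace_diff)

lemma csum_ctens_sub:
  assumes V: "X.subspace V" and b: "adm m j b" and S: "\<And>i. S i \<in> ctens_sub \<iota> m sc V"
  shows "csum \<iota> m b S \<in> ctens_sub \<iota> m sc V"
proof -
  have S_ctens: "S i \<in> ctens \<iota> m sc" for i
    using S by (rule ctens_sub_ctens)
  note level = adm_csum_eq_sum[where y=S, OF b ctens_zero[OF S_ctens]]
  show ?thesis
    unfolding ctens_sub_def ctens_def mem_Collect_eq
  proof (intro conjI ballI allI impI)
    fix l l' assume "l \<in> Bdual \<iota> m" "l' \<in> Bdual \<iota> m"
    then obtain K where K: "l \<in> quot_dual \<iota> m K" "l' \<in> quot_dual \<iota> m K"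
      by (rule Bdual_quot_dual2E)
    obtain n where n: "\<And>l. l \<in> quot_dual \<iota> m K \<Longrightarrow> csum \<iota> m b S l = (\<Sum>i<n. S i (dual_mult (b i) l))"
      using level by blast
    have "S i (dual_mult (b i) (\<lambda>x. l x + l' x)) = S i (dual_mult (b i) l) + S i (dual_mult (b i) l')" for i
      using ctens_add[OF S_ctens Bdual_dual_mult Bdual_dual_mult, OF quot_dual_Bdual quot_dual_Bdual, OF K]
      by (simp add: dual_mult_def distrib_left)
    then show "csum \<iota> m b S (\<lambda>x. l x + l' x) = csum \<iota> m b S l + csum \<iota> m b S l'"
      using K quot_dual_add[OF K] n by (simp add: sum.distrib)
  next
    fix c l assume "l \<in> Bdual \<iota> m"
    then obtain K where K: "l \<in> quot_dual \<iota> m K"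
      by (rule Bdual_quot_dualE)
    obtain n where n: "\<And>l. l \<in> quot_dual \<iota> m K \<Longrightarrow> csum \<iota> m b S l = (\<Sum>i<n. S i (dual_mult (b i) l))"
      using level by blast
    have "S i (dual_mult (b i) (\<lambda>x. c * l x)) = sc c (S i (dual_mult (b i) l))" for i
      using ctens_scale[OF S_ctens Bdual_dual_mult[OF quot_dual_Bdual[OF K]]]
      by (simp add: dual_mult_def)
    then show "csum \<iota> m b S (\<lambda>x. c * l x) = sc c (csum \<iota> m b S l)"
      using K quot_dual_scale[OF K] n by (simp add: X.scale_sum_right)
  next
    fix l assume "l \<notin> Bdual \<iota> m"
    then show "csum \<iota> m b S l = 0"
      by (rule csum_outside)
  next
    fix l
    show "csum \<iota> m b S l \<in> V"
    proof (cases "l \<in> Bdual \<iota> m")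
      case True
      then obtain K where K: "l \<in> quot_dual \<iota> m K"
        by (rule Bdual_quot_dualE)
      obtain n where "csum \<iota> m b S l = (\<Sum>i<n. S i (dual_mult (b i) l))"
        using level K by metis
      then show ?thesis
        using X.subspace_sum[OF V ctens_sub_range[OF S]] by simp
    qed (simp add: csum_outside X.subspace_0[OF V])
  qed
qed

lemma ctens_sub_glue:
  assumes T: "\<And>K. T K \<in> ctens_sub \<iota> m sc V"
    and compat: "\<And>K K' l. K \<le> K' \<Longrightarrow> l \<in> quot_dual \<iota> m K \<Longrightarrow> T K' l = T K l"
  obtains S where "S \<in> ctens_sub \<iota> m sc V" "\<And>K l. l \<in> quot_dual \<iota> m K \<Longrightarrow> S l = T K l"
proof
  define S where "S l = T (LEAST K. l \<in> quot_dual \<iota> m K) l" for l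
  show S_eq: "S l = T K l" if "l \<in> quot_dual \<iota> m K" for K l
  proof -
    have "(LEAST K. l \<in> quot_dual \<iota> m K) \<le> K" "l \<in> quot_dual \<iota> m (LEAST K. l \<in> quot_dual \<iota> m K)"
      using that by (rule Least_le, rule LeastI)
    from compat[OF this] show ?thesis
      unfolding S_def by simp
  qed
  have T_ctens: "T K \<in> ctens \<iota> m sc" for K
    using T by (rule ctens_sub_ctens)
  show "S \<in> ctens_sub \<iota> m sc V"
    unfolding ctens_sub_def ctens_def mem_Collect_eq
  proof (intro conjI ballI allI impI)
    fix l l' assume "l \<in> Bdual \<iota> m" "l' \<in> Bdual \<iota> m"
    then obtain K where K: "l \<in> quot_dual \<iota> m K" "l' \<in> quot_dual \<iota> m K"
      by (rule Bdual_quot_dual2E)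
    then show "S (\<lambda>b. l b + l' b) = S l + S l'"
      using ctens_add[OF T_ctens quot_dual_Bdual[OF K(1)] quot_dual_Bdual[OF K(2)]]
      by (simp add: S_eq[OF quot_dual_add[OF K]] S_eq[OF K(1)] S_eq[OF K(2)])
  next
    fix c l assume "l \<in> Bdual \<iota> m"
    then obtain K where K: "l \<in> quot_dual \<iota> m K"
      by (rule Bdual_quot_dualE)
    then show "S (\<lambda>b. c * l b) = sc c (S l)"
      using ctens_scale[OF T_ctens quot_dual_Bdual[OF K]]
      by (simp add: S_eq[OF quot_dual_scale[OF K]] S_eq[OF K])
  next
    fix l assume "l \<notin> Bdual \<iota> m"
    then show "S l = 0"
      unfolding S_def by (rule ctens_outside[OF T_ctens])
  next
    fix l show "S l \<in> V"
      unfolding S_def by (rule ctens_sub_range[OF T])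
  qed
qed

lemma Bact_iota: "T \<in> ctens \<iota> m sc \<Longrightarrow> Bact \<iota> m (\<iota> c) T = (\<lambda>l. sc c (T l))"
  by (auto simp: Bact_def Bdual_scale ctens_scale ctens_outside)

lemma Bact_ctens_sub:
  assumes V: "X.subspace V" and T: "T \<in> ctens_sub \<iota> m sc V"
  shows "Bact \<iota> m b T \<in> ctens_sub \<iota> m sc V"
proof -
  note T_ctens = ctens_sub_ctens[OF T] and mult_dual = Bdual_dual_mult[unfolded dual_mult_def]
  have "T (\<lambda>x. l (b * x) + l' (b * x)) = T (\<lambda>x. l (b * x)) + T (\<lambda>x. l' (b * x))"
    if "l \<in> Bdual \<iota> m" "l' \<in> Bdual \<iota> m" for l l'
    using ctens_add[OF T_ctens mult_dual[OF that(1)] mult_dual[OF that(2)]] .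
  moreover have "T (\<lambda>x. c * l (b * x)) = sc c (T (\<lambda>x. l (b * x)))" if "l \<in> Bdual \<iota> m" for c l
    using ctens_scale[OF T_ctens mult_dual[OF that]] .
  ultimately show ?thesis
    using ctens_sub_range[OF T] X.subspace_0[OF V]
    by (auto simp: ctens_sub_def ctens_def Bact_def Bdual_add_fun Bdual_scale_fun)
qed

end

locale framed_tensor = framed_deformation + coefficient_space
begin

lemma ctens_frame_expansion:
  assumes "T \<in> ctens \<iota> m sc" "l \<in> quot_dual \<iota> m K"
  shows "T l = (\<Sum>i<N K. sc (l (E i)) (T (ES i)))"
proof -
  have "T l = T (\<lambda>b. \<Sum>i<N K. l (E i) * ES i b)"
    using quot_dual_frame_expansion_1[OF assms(2)] by simp
  also have "\<dots> = (\<Sum>i<N K. sc (l (E i)) (T (ES i)))"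
    by (rule ctens_sum[OF assms(1)]) (simp add: quot_dual_Bdual[OF frame_ES])
  finally show ?thesis .
qed

text \<open>In the expansion of T along the frame, the first block only sees B/m and drops out.\<close>

lemma ctens_vanishing_mod_m_in_mX:
  assumes T: "T \<in> ctens \<iota> m sc" and T1: "\<And>l. l \<in> quot_dual \<iota> m 1 \<Longrightarrow> T l = 0"
  shows "T \<in> mX \<iota> m sc"
proof -
  define b where "b i = (if i < N 1 then 0 else E i)" for i
  have b_mpow: "b i \<in> mpow m K" if "N K \<le> i" for K i
    using frame_E[OF that] by (simp add: b_def zero_in_mpow)
  have "adm m 1 b"
    unfolding b_def by (rule adm_frame_tail)
  moreover have "T = csum \<iota> m b (\<lambda>i. emb \<iota> m sc (T (ES i)))"
  proof
    fix l show "T l = csum \<iota> m b (\<lambda>i. emb \<iota> m sc (T (ES i))) l"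
    proof (cases "l \<in> Bdual \<iota> m")
      case True
      then obtain K where K: "l \<in> quot_dual \<iota> m K"
        by (rule Bdual_quot_dualE)
      have "csum \<iota> m b (\<lambda>i. emb \<iota> m sc (T (ES i))) l
          = (\<Sum>i<N K. emb \<iota> m sc (T (ES i)) (dual_mult (b i) l))"
        by (rule csum_eq_sum_lessThan[OF K]) (simp_all add: b_mpow emb_def)
      also have "\<dots> = (\<Sum>i<N K. sc (l (E i)) (T (ES i)))"
        using Bdual_dual_mult[OF True] T1[OF frame_ES]
        by (intro sum.cong refl) (simp add: emb_def dual_mult_def b_def)
      finally have "csum \<iota> m b (\<lambda>i. emb \<iota> m sc (T (ES i))) l = (\<Sum>i<N K. sc (l (E i)) (T (ES i)))" .
      then show ?thesis
        using ctens_frame_expansion[OF T K] by simp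
    qed (simp add: csum_outside ctens_outside[OF T])
  qed
  ultimately show ?thesis
    unfolding mX_def mY_def by blast
qed

end

section \<open>The B-linear extension of a section\<close>

text \<open>On B/m^K the frame writes T as the finite sum of the E i \<otimes> T (ES i), so the
  B-linear extension of \<phi> must send it to the sum of the E i \<phi> (T (ES i)).\<close>

definition frame_ext :: "(complex \<Rightarrow> 'b::comm_ring_1) \<Rightarrow> 'b set \<Rightarrow> (nat \<Rightarrow> 'b) \<Rightarrow> (nat \<Rightarrow> 'b \<Rightarrow> complex)
     \<Rightarrow> ('x \<Rightarrow> ('b \<Rightarrow> complex) \<Rightarrow> 'x::comm_monoid_add) \<Rightarrow> (('b \<Rightarrow> complex) \<Rightarrow> 'x) \<Rightarrow> ('b \<Rightarrow> complex) \<Rightarrow> 'x"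
  where "frame_ext \<iota> m E ES \<phi> T = csum \<iota> m E (\<lambda>i. \<phi> (T (ES i)))"

locale lifted_section = framed_tensor +
  fixes M and \<phi>
  assumes submodule: "B_submodule \<iota> m sc M"
    and phi_section: "\<And>y. y \<in> proj \<iota> m ` M \<Longrightarrow> \<phi> y \<in> M \<and> proj \<iota> m (\<phi> y) = y"
    and phi_add: "\<And>y z. y \<in> proj \<iota> m ` M \<Longrightarrow> z \<in> proj \<iota> m ` M \<Longrightarrow> \<phi> (y + z) = (\<lambda>l. \<phi> y l + \<phi> z l)"
    and phi_scale: "\<And>c y. y \<in> proj \<iota> m ` M \<Longrightarrow> \<phi> (sc c y) = (\<lambda>l. sc c (\<phi> y l))"
begin

abbreviation V where "V \<equiv> proj \<iota> m ` M"

abbreviation \<Phi> where "\<Phi> \<equiv> frame_ext \<iota> m E ES \<phi>"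

lemma M_ctens: "T \<in> M \<Longrightarrow> T \<in> ctens \<iota> m sc"
  using submodule by (auto simp: B_submodule_def)

lemma M_zero: "(\<lambda>_. 0) \<in> M"
  using submodule by (simp add: B_submodule_def)

lemma M_add: "T \<in> M \<Longrightarrow> S \<in> M \<Longrightarrow> (\<lambda>l. T l + S l) \<in> M"
  using submodule by (simp add: B_submodule_def)

lemma M_Bact: "T \<in> M \<Longrightarrow> Bact \<iota> m b T \<in> M"
  using submodule by (simp add: B_submodule_def)

lemma M_diff:
  assumes "T \<in> M" "S \<in> M"
  shows "(\<lambda>l. T l - S l) \<in> M"
proof -
  have "(\<lambda>l. T l - S l) = (\<lambda>l. T l + Bact \<iota> m (\<iota> (- 1)) S l)"
    using Bact_iota[OF M_ctens[OF assms(2)]] by simp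
  then show ?thesis
    using M_add[OF assms(1) M_Bact[OF assms(2)]] by simp
qed

lemma subspace_V: "X.subspace V"
  unfolding X.subspace_def
proof (intro conjI ballI allI)
  show "0 \<in> V"
    using M_zero by (force simp: proj_def)
  fix c y z assume "y \<in> V" "z \<in> V"
  then obtain T S where "T \<in> M" "S \<in> M" "y = T (resid \<iota> m)" "z = S (resid \<iota> m)"
    by (auto simp: proj_def)
  then show "y + z \<in> V" "sc c y \<in> V"
    using M_add M_Bact[of T "\<iota> c"] Bact_iota[OF M_ctens[of T]]
    by (force simp: proj_def)+
qed

lemma phi_M: "y \<in> V \<Longrightarrow> \<phi> y \<in> M"
  using phi_section by blast

lemma phi_ctens: "y \<in> V \<Longrightarrow> \<phi> y \<in> ctens \<iota> m sc"
  using phi_M M_ctens by blast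

lemma phi_zero: "\<phi> 0 = (\<lambda>_. 0)"
  using phi_add[OF X.subspace_0[OF subspace_V] X.subspace_0[OF subspace_V]] by (simp add: fun_eq_iff)

lemma phi_sum:
  assumes "\<And>a. a \<in> A \<Longrightarrow> y a \<in> V"
  shows "\<phi> (\<Sum>a\<in>A. sc (c a) (y a)) = (\<lambda>l. \<Sum>a\<in>A. sc (c a) (\<phi> (y a) l))"
  using assms
proof (induction A rule: infinite_finite_induct)
  case (insert a A)
  have "(\<Sum>a\<in>A. sc (c a) (y a)) \<in> V"
    using insert by (intro X.subspace_sum[OF subspace_V] X.subspace_scale[OF subspace_V]) simp
  then show ?case
    using insert phi_add[OF X.subspace_scale[OF subspace_V]] phi_scale by simp
qed (simp_all add: phi_zero)

lemma phi_quot_dual_1: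
  assumes y: "y \<in> V" and l: "l \<in> quot_dual \<iota> m 1"
  shows "\<phi> y l = sc (l 1) y"
proof -
  have "\<phi> y l = \<phi> y (\<lambda>b. l 1 * resid \<iota> m b)"
    by (rule arg_cong[where f="\<phi> y"], rule quot_dual_1_eq[OF l])
  also have "\<dots> = sc (l 1) (proj \<iota> m (\<phi> y))"
    unfolding proj_def by (rule ctens_scale[OF phi_ctens[OF y] resid_Bdual])
  finally show ?thesis
    using phi_section y by simp
qed

lemma frame_ext_outside: "l \<notin> Bdual \<iota> m \<Longrightarrow> \<Phi> T l = 0"
  by (simp add: frame_ext_def csum_outside)

lemma frame_ext_eq:
  assumes T: "T \<in> ctens_sub \<iota> m sc V" and l: "l \<in> quot_dual \<iota> m K"
  shows "\<Phi> T l = (\<Sum>i<N K. \<phi> (T (ES i)) (dual_mult (E i) l))"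
  unfolding frame_ext_def
  by (rule csum_eq_sum_lessThan[OF l])
    (simp_all add: frame_E ctens_zero[OF phi_ctens[OF ctens_sub_range[OF T]]])

lemma frame_ext_cong:
  assumes "T \<in> ctens_sub \<iota> m sc V" "S \<in> ctens_sub \<iota> m sc V"
    and "\<And>l. l \<in> quot_dual \<iota> m K \<Longrightarrow> T l = S l" and "l \<in> quot_dual \<iota> m K"
  shows "\<Phi> T l = \<Phi> S l"
  using assms by (simp add: frame_ext_eq frame_ES)

lemma frame_ext_emb:
  assumes y: "y \<in> V"
  shows "\<Phi> (emb \<iota> m sc y) = \<phi> y"
proof
  fix l show "\<Phi> (emb \<iota> m sc y) l = \<phi> y l"
  proof (cases "l \<in> Bdual \<iota> m")
    case True
    then obtain K where K: "l \<in> quot_dual \<iota> m K"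
      by (rule Bdual_quot_dualE)
    have "\<Phi> (emb \<iota> m sc y) l = (\<Sum>i<N K. \<phi> (emb \<iota> m sc y (ES i)) (dual_mult (E i) l))"
      by (rule frame_ext_eq[OF emb_ctens_sub[OF subspace_V y] K])
    also have "\<dots> = (\<Sum>i<N K. sc (ES i 1) (\<phi> y (dual_mult (E i) l)))"
      using y by (intro sum.cong refl) (simp add: emb_def quot_dual_Bdual[OF frame_ES] phi_scale)
    also have "\<dots> = \<phi> y (\<lambda>x. \<Sum>i<N K. ES i 1 * dual_mult (E i) l x)"
      by (rule ctens_sum[OF phi_ctens[OF y], symmetric]) (rule Bdual_dual_mult[OF True])
    also have "(\<lambda>x. \<Sum>i<N K. ES i 1 * dual_mult (E i) l x) = l"
    proof
      fix x show "(\<Sum>i<N K. ES i 1 * dual_mult (E i) l x) = l x"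
        using quot_dual_frame_expansion[OF K, of 1 x] by (simp add: dual_mult_def)
    qed
    finally show ?thesis .
  qed (simp add: frame_ext_outside ctens_outside[OF phi_ctens[OF y]])
qed

lemma frame_ext_add:
  assumes T: "T \<in> ctens_sub \<iota> m sc V" and S: "S \<in> ctens_sub \<iota> m sc V"
  shows "\<Phi> (\<lambda>l. T l + S l) = (\<lambda>l. \<Phi> T l + \<Phi> S l)"
proof
  fix l show "\<Phi> (\<lambda>l. T l + S l) l = \<Phi> T l + \<Phi> S l"
  proof (cases "l \<in> Bdual \<iota> m")
    case True
    then obtain K where K: "l \<in> quot_dual \<iota> m K"
      by (rule Bdual_quot_dualE)
    show ?thesis
      using phi_add[OF ctens_sub_range[OF T] ctens_sub_range[OF S]]
      by (simp add: frame_ext_eq[OF ctens_sub_add[OF subspace_V T S] K] frame_ext_eq[OF T K]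
          frame_ext_eq[OF S K] sum.distrib)
  qed (simp add: frame_ext_outside)
qed

lemma frame_ext_diff:
  assumes T: "T \<in> ctens_sub \<iota> m sc V" and S: "S \<in> ctens_sub \<iota> m sc V"
  shows "\<Phi> (\<lambda>l. T l - S l) = (\<lambda>l. \<Phi> T l - \<Phi> S l)"
  using frame_ext_add[OF ctens_sub_diff[OF subspace_V T S] S] by (simp add: fun_eq_iff eq_diff_eq)

lemma frame_ext_Bact:
  assumes T: "T \<in> ctens_sub \<iota> m sc V"
  shows "\<Phi> (Bact \<iota> m b T) = Bact \<iota> m b (\<Phi> T)"
proof
  fix l show "\<Phi> (Bact \<iota> m b T) l = Bact \<iota> m b (\<Phi> T) l"
  proof (cases "l \<in> Bdual \<iota> m")
    case True
    then obtain K where K: "l \<in> quot_dual \<iota> m K"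
      by (rule Bdual_quot_dualE)
    note TV = ctens_sub_range[OF T]
    have Bact_ES: "Bact \<iota> m b T (ES i) = (\<Sum>p<N K. sc (ES i (b * E p)) (T (ES p)))" if "i < N K" for i
      using ctens_frame_expansion[OF ctens_sub_ctens[OF T] quot_dual_dual_mult[OF frame_ES[OF that]]]
        quot_dual_Bdual[OF frame_ES[OF that]]
      by (simp add: Bact_def dual_mult_def)
    have "\<Phi> (Bact \<iota> m b T) l = (\<Sum>i<N K. \<phi> (Bact \<iota> m b T (ES i)) (dual_mult (E i) l))"
      by (rule frame_ext_eq[OF Bact_ctens_sub[OF subspace_V T] K])
    also have "\<dots> = (\<Sum>i<N K. \<Sum>p<N K. sc (ES i (b * E p)) (\<phi> (T (ES p)) (dual_mult (E i) l)))"
      using TV by (intro sum.cong refl) (simp add: Bact_ES phi_sum)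
    also have "\<dots> = (\<Sum>p<N K. \<Sum>i<N K. sc (ES i (b * E p)) (\<phi> (T (ES p)) (dual_mult (E i) l)))"
      by (rule sum.swap)
    also have "\<dots> = (\<Sum>p<N K. \<phi> (T (ES p)) (dual_mult (b * E p) l))"
    proof (intro sum.cong refl)
      fix p
      have "dual_mult (b * E p) l = (\<lambda>x. \<Sum>i<N K. ES i (b * E p) * dual_mult (E i) l x)"
        unfolding dual_mult_def by (rule ext) (rule quot_dual_frame_expansion[OF K])
      then have "\<phi> (T (ES p)) (dual_mult (b * E p) l)
          = (\<Sum>i<N K. sc (ES i (b * E p)) (\<phi> (T (ES p)) (dual_mult (E i) l)))"
        by (simp only: ctens_sum[OF phi_ctens[OF TV] Bdual_dual_mult[OF True]])
      then show "(\<Sum>i<N K. sc (ES i (b * E p)) (\<phi> (T (ES p)) (dual_mult (E i) l)))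
          = \<phi> (T (ES p)) (dual_mult (b * E p) l)"
        by (rule sym)
    qed
    also have "\<dots> = \<Phi> T (dual_mult b l)"
      using frame_ext_eq[OF T quot_dual_dual_mult[OF K]] by (simp add: dual_mult_dual_mult)
    finally show ?thesis
      using True by (simp add: Bact_def dual_mult_def)
  qed (simp add: frame_ext_outside Bact_def)
qed

lemma frame_ext_csum:
  assumes b: "adm m j b" and S: "\<And>i. S i \<in> ctens_sub \<iota> m sc V"
  shows "\<Phi> (csum \<iota> m b S) = csum \<iota> m b (\<lambda>i. \<Phi> (S i))"
proof
  fix l show "\<Phi> (csum \<iota> m b S) l = csum \<iota> m b (\<lambda>i. \<Phi> (S i)) l"
  proof (cases "l \<in> Bdual \<iota> m")
    case True
    then obtain K where K: "l \<in> quot_dual \<iota> m K"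
      by (rule Bdual_quot_dualE)
    obtain n where n: "\<And>i. n \<le> i \<Longrightarrow> b i \<in> mpow m K"
      using adm_eventually_mpow[OF b] by blast
    have S_ES: "csum \<iota> m b S (ES i) = (\<Sum>j<n. Bact \<iota> m (b j) (S j) (ES i))" if "i < N K" for i
    proof -
      have "csum \<iota> m b S (ES i) = (\<Sum>j<n. S j (dual_mult (b j) (ES i)))"
        by (rule csum_eq_sum_lessThan[OF frame_ES[OF that]])
          (simp_all add: n ctens_zero[OF ctens_sub_ctens[OF S]])
      then show ?thesis
        using quot_dual_Bdual[OF frame_ES[OF that]] by (simp add: Bact_def dual_mult_def)
    qed
    have Bact_V: "Bact \<iota> m (b j) (S j) (ES i) \<in> V" for i j
      using ctens_sub_range[OF Bact_ctens_sub[OF subspace_V S]] .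
    have "\<Phi> (csum \<iota> m b S) l = (\<Sum>i<N K. \<phi> (csum \<iota> m b S (ES i)) (dual_mult (E i) l))"
      by (rule frame_ext_eq[OF csum_ctens_sub[OF subspace_V b S] K])
    also have "\<dots> = (\<Sum>i<N K. \<Sum>j<n. \<phi> (Bact \<iota> m (b j) (S j) (ES i)) (dual_mult (E i) l))"
      using phi_sum[of "{..<n}" "\<lambda>j. Bact \<iota> m (b j) (S j) (ES _)" "\<lambda>_. 1"] Bact_V
      by (intro sum.cong refl) (simp add: S_ES)
    also have "\<dots> = (\<Sum>j<n. \<Phi> (Bact \<iota> m (b j) (S j)) l)"
      by (subst sum.swap) (simp add: frame_ext_eq[OF Bact_ctens_sub[OF subspace_V S] K])
    also have "\<dots> = (\<Sum>j<n. \<Phi> (S j) (dual_mult (b j) l))"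
      using True by (simp only: frame_ext_Bact[OF S]) (simp add: Bact_def dual_mult_def)
    also have "\<dots> = csum \<iota> m b (\<lambda>i. \<Phi> (S i)) l"
      by (rule csum_eq_sum_lessThan[OF K, symmetric]) (simp_all add: n frame_ext_def csum_zero_fun)
    finally show ?thesis .
  qed (simp add: frame_ext_outside csum_outside)
qed

lemma frame_ext_in_M:
  assumes "pseudoclosed \<iota> m M" and T: "T \<in> ctens_sub \<iota> m sc V"
  shows "\<Phi> T \<in> M"
proof -
  have "\<Phi> T \<in> BY \<iota> m M"
    unfolding BY_def frame_ext_def using adm_frame phi_M[OF ctens_sub_range[OF T]] by blast
  then show ?thesis
    using assms(1) by (auto simp: pseudoclosed_def)
qed

text \<open>Induction on K: on the new layer of the frame, which lies in m^K, \<phi> acts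
  through the residue field, where it is the identity.\<close>

lemma frame_ext_vanish:
  assumes U: "U \<in> ctens_sub \<iota> m sc V"
  shows "(\<And>l. l \<in> quot_dual \<iota> m K \<Longrightarrow> \<Phi> U l = 0) \<Longrightarrow> l \<in> quot_dual \<iota> m K \<Longrightarrow> U l = 0"
proof (induction K arbitrary: l)
  case 0
  then show ?case
    using ctens_zero[OF ctens_sub_ctens[OF U]] by (simp add: quot_dual_0)
next
  case (Suc K)
  have "\<Phi> U l' = 0" if "l' \<in> quot_dual \<iota> m K" for l'
    using Suc.prems(1)[OF quot_dual_mono[OF le_SucI[OF order_refl] that]] .
  then have UK: "U (ES i) = 0" if "i < N K" for i
    using Suc.IH[OF _ frame_ES[OF that]] by blast
  have "\<phi> (U (ES i)) (dual_mult (E i) l) = sc (l (E i)) (U (ES i))" for i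
  proof (cases "i < N K")
    case False
    then have "dual_mult (E i) l \<in> quot_dual \<iota> m 1"
      using dual_mult_quot_dual_1[OF frame_E Suc.prems(2)] by simp
    then show ?thesis
      using phi_quot_dual_1[OF ctens_sub_range[OF U]] by (simp add: dual_mult_def)
  qed (simp add: UK phi_zero)
  then have "\<Phi> U l = (\<Sum>i<N (Suc K). sc (l (E i)) (U (ES i)))"
    using frame_ext_eq[OF U Suc.prems(2)] by simp
  also have "\<dots> = U l"
    using ctens_frame_expansion[OF ctens_sub_ctens[OF U] Suc.prems(2)] by simp
  finally show ?case
    using Suc.prems by simp
qed

lemma frame_ext_inj:
  assumes T: "T \<in> ctens_sub \<iota> m sc V" and S: "S \<in> ctens_sub \<iota> m sc V" and eq: "\<Phi> T = \<Phi> S"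
  shows "T = S"
proof
  fix l
  define U where "U l = T l - S l" for l
  have U: "U \<in> ctens_sub \<iota> m sc V"
    unfolding U_def by (rule ctens_sub_diff[OF subspace_V T S])
  have "\<Phi> U = (\<lambda>_. 0)"
    unfolding U_def frame_ext_diff[OF T S] eq by simp
  then have "U l = 0"
    using frame_ext_vanish[OF U] ctens_outside[OF ctens_sub_ctens[OF U]]
    by (cases "l \<in> Bdual \<iota> m") (auto elim: Bdual_quot_dualE)
  then show "T l = S l"
    by (simp add: U_def)
qed

lemma section_residual_in_mY:
  assumes qf: "quasi_flat \<iota> m sc M" and x: "x \<in> M"
  shows "(\<lambda>l. x l - \<phi> (proj \<iota> m x) l) \<in> mY \<iota> m M"
proof -
  have y0: "proj \<iota> m x \<in> V"
    using x by simp
  have x': "(\<lambda>l. x l - \<phi> (proj \<iota> m x) l) \<in> M"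
    by (rule M_diff[OF x phi_M[OF y0]])
  have "x l - \<phi> (proj \<iota> m x) l = 0" if "l \<in> quot_dual \<iota> m 1" for l
  proof -
    have "x l = x (\<lambda>b. l 1 * resid \<iota> m b)"
      by (rule arg_cong[where f=x], rule quot_dual_1_eq[OF that])
    also have "\<dots> = sc (l 1) (proj \<iota> m x)"
      unfolding proj_def by (rule ctens_scale[OF M_ctens[OF x] resid_Bdual])
    finally show ?thesis
      by (simp add: phi_quot_dual_1[OF y0 that])
  qed
  then have "(\<lambda>l. x l - \<phi> (proj \<iota> m x) l) \<in> mX \<iota> m sc"
    by (rule ctens_vanishing_mod_m_in_mX[OF M_ctens[OF x']])
  then show ?thesis
    using qf x' by (auto simp: quasi_flat_def)
qed

text \<open>Induction on K: x - \<phi> (proj x) vanishes modulo m, so quasi-flatness writes it as an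
  m-adic combination of elements of M, and these need only be approximated to one order less.\<close>

lemma frame_ext_approx:
  assumes qf: "quasi_flat \<iota> m sc M" and x: "x \<in> M"
  shows "\<exists>T\<in>ctens_sub \<iota> m sc V. \<forall>l\<in>quot_dual \<iota> m K. \<Phi> T l = x l"
  using x
proof (induction K arbitrary: x)
  case 0
  have "\<Phi> (\<lambda>_. 0) (\<lambda>_. 0) = x (\<lambda>_. 0)"
    using ctens_zero[OF M_ctens[OF "0"]] by (simp add: frame_ext_def csum_zero_fun)
  then show ?case
    using ctens_sub_zero[OF X.subspace_0[OF subspace_V]] by (auto simp: quot_dual_0)
next
  case (Suc K)
  define y0 where "y0 = proj \<iota> m x"
  have y0: "y0 \<in> V"
    using Suc.prems by (simp add: y0_def)
  define x' where "x' l = x l - \<phi> y0 l" for l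
  have "x' \<in> mY \<iota> m M"
    unfolding x'_def y0_def by (rule section_residual_in_mY[OF qf Suc.prems])
  then obtain b y where x': "x' = csum \<iota> m b y" and b: "adm m 1 b" and y: "\<And>i. y i \<in> M"
    unfolding mY_def by blast
  have "\<forall>i. \<exists>T. T \<in> ctens_sub \<iota> m sc V \<and> (\<forall>l\<in>quot_dual \<iota> m K. \<Phi> T l = y i l)"
    using Suc.IH[OF y] by blast
  then obtain T where T: "\<And>i. T i \<in> ctens_sub \<iota> m sc V" "\<And>i l. l \<in> quot_dual \<iota> m K \<Longrightarrow> \<Phi> (T i) l = y i l"
    unfolding choice_iff by blast
  note emb_y0 = emb_ctens_sub[OF subspace_V y0] and csum_T = csum_ctens_sub[OF subspace_V b T(1)]
  define S where "S l = emb \<iota> m sc y0 l + csum \<iota> m b T l" for l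
  have "\<Phi> S l = x l" if l: "l \<in> quot_dual \<iota> m (Suc K)" for l
  proof -
    have "\<Phi> S l = \<phi> y0 l + csum \<iota> m b (\<lambda>i. \<Phi> (T i)) l"
      unfolding S_def frame_ext_add[OF emb_y0 csum_T]
      by (simp add: frame_ext_emb[OF y0] frame_ext_csum[OF b T(1)])
    also have "csum \<iota> m b (\<lambda>i. \<Phi> (T i)) l = csum \<iota> m b y l"
      using adm_Suc_0_mem[OF is_ideal_m b] T(2) ctens_zero[OF M_ctens[OF y]]
      by (intro csum_eq_on_quot_dual_Suc[OF _ l b]) (simp_all add: frame_ext_def csum_zero_fun)
    finally show ?thesis
      by (simp add: x'[symmetric] x'_def)
  qed
  moreover have "S \<in> ctens_sub \<iota> m sc V"
    unfolding S_def by (rule ctens_sub_add[OF subspace_V emb_y0 csum_T])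
  ultimately show ?case
    by blast
qed

lemma frame_ext_surj:
  assumes qf: "quasi_flat \<iota> m sc M" and x: "x \<in> M"
  shows "\<exists>T\<in>ctens_sub \<iota> m sc V. \<Phi> T = x"
proof -
  have "\<forall>K. \<exists>T. T \<in> ctens_sub \<iota> m sc V \<and> (\<forall>l\<in>quot_dual \<iota> m K. \<Phi> T l = x l)"
    using frame_ext_approx[OF qf x] by blast
  then obtain T where T: "\<And>K. T K \<in> ctens_sub \<iota> m sc V" "\<And>K l. l \<in> quot_dual \<iota> m K \<Longrightarrow> \<Phi> (T K) l = x l"
    unfolding choice_iff by blast
  have compat: "T K' l = T K l" if "K \<le> K'" "l \<in> quot_dual \<iota> m K" for K K' l
  proof -
    have "\<Phi> (\<lambda>l. T K' l - T K l) l' = 0" if "l' \<in> quot_dual \<iota> m K" for l'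
      using T(2)[OF that] T(2)[OF quot_dual_mono[OF \<open>K \<le> K'\<close> that]] by (simp add: frame_ext_diff[OF T(1) T(1)])
    then show ?thesis
      using frame_ext_vanish[OF ctens_sub_diff[OF subspace_V T(1) T(1)] _ that(2)] by simp
  qed
  obtain S where S: "S \<in> ctens_sub \<iota> m sc V" "\<And>K l. l \<in> quot_dual \<iota> m K \<Longrightarrow> S l = T K l"
    using ctens_sub_glue[where T=T, OF T(1) compat] by blast
  have "\<Phi> S = x"
  proof
    fix l show "\<Phi> S l = x l"
    proof (cases "l \<in> Bdual \<iota> m")
      case True
      then obtain K where "l \<in> quot_dual \<iota> m K"
        by (rule Bdual_quot_dualE)
      then show ?thesis
        using frame_ext_cong[OF S(1) T(1) S(2)] T(2) by simp
    qed (simp add: frame_ext_outside ctens_outside[OF M_ctens[OF x]])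
  qed
  then show ?thesis
    using S(1) by blast
qed

end

theorem lemma2p28:
  fixes \<iota> :: "complex \<Rightarrow> 'b::comm_ring_1" and m :: "'b set"
    and sc :: "complex \<Rightarrow> 'x::ab_group_add \<Rightarrow> 'x"
    and M :: "(('b \<Rightarrow> complex) \<Rightarrow> 'x) set"
    and \<phi> :: "'x \<Rightarrow> (('b \<Rightarrow> complex) \<Rightarrow> 'x)"
  assumes base: "deformation_base \<iota> m"
    and X: "vector_space sc"
    and sub: "B_submodule \<iota> m sc M"
    and qf: "quasi_flat \<iota> m sc M"
    and pc: "pseudoclosed \<iota> m M"
    and sect: "\<forall>y\<in>proj \<iota> m ` M. \<phi> y \<in> M \<and> proj \<iota> m (\<phi> y) = y"
    and lin_add: "\<forall>y\<in>proj \<iota> m ` M. \<forall>z\<in>proj \<iota> m ` M. \<phi> (y + z) = (\<lambda>l. \<phi> y l + \<phi> z l)"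
    and lin_scale: "\<forall>c. \<forall>y\<in>proj \<iota> m ` M. \<phi> (sc c y) = (\<lambda>l. sc c (\<phi> y l))"
  shows "\<exists>\<Phi>. (\<forall>b y. adm m 0 b \<and> (\<forall>i. y i \<in> proj \<iota> m ` M) \<longrightarrow>
                 \<Phi> (csum \<iota> m b (\<lambda>i. emb \<iota> m sc (y i))) = csum \<iota> m b (\<lambda>i. \<phi> (y i)))
            \<and> (\<forall>T\<in>ctens_sub \<iota> m sc (proj \<iota> m ` M). \<forall>S\<in>ctens_sub \<iota> m sc (proj \<iota> m ` M).
                 \<Phi> (\<lambda>l. T l + S l) = (\<lambda>l. \<Phi> T l + \<Phi> S l))
            \<and> (\<forall>b. \<forall>T\<in>ctens_sub \<iota> m sc (proj \<iota> m ` M). \<Phi> (Bact \<iota> m b T) = Bact \<iota> m b (\<Phi> T))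
            \<and> bij_betw \<Phi> (ctens_sub \<iota> m sc (proj \<iota> m ` M)) M"
proof -
  obtain E ES N where "adic_frame \<iota> m E ES N"
    using deformation.adic_frame_exists[OF deformation.intro[OF base]] by blast
  then interpret lifted_section \<iota> m E ES N sc M \<phi>
    using base X sub sect lin_add lin_scale
    unfolding lifted_section_def lifted_section_axioms_def framed_tensor_def deformation_def
      framed_deformation_def framed_deformation_axioms_def coefficient_space_def
    by blast
  show ?thesis
  proof (intro exI[of _ "frame_ext \<iota> m E ES \<phi>"] conjI allI impI ballI)
    fix b :: "nat \<Rightarrow> 'b" and y :: "nat \<Rightarrow> 'x"
    assume "adm m 0 b \<and> (\<forall>i. y i \<in> proj \<iota> m ` M)"
    then have b: "adm m 0 b" and y: "\<And>i. y i \<in> proj \<iota> m ` M"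
      by auto
    have "frame_ext \<iota> m E ES \<phi> (csum \<iota> m b (\<lambda>i. emb \<iota> m sc (y i)))
        = csum \<iota> m b (\<lambda>i. frame_ext \<iota> m E ES \<phi> (emb \<iota> m sc (y i)))"
      by (rule frame_ext_csum[OF b emb_ctens_sub[OF subspace_V y]])
    then show "frame_ext \<iota> m E ES \<phi> (csum \<iota> m b (\<lambda>i. emb \<iota> m sc (y i))) = csum \<iota> m b (\<lambda>i. \<phi> (y i))"
      by (simp add: frame_ext_emb[OF y])
  next
    show "bij_betw (frame_ext \<iota> m E ES \<phi>) (ctens_sub \<iota> m sc (proj \<iota> m ` M)) M"
      unfolding bij_betw_def inj_on_def
      using frame_ext_inj frame_ext_in_M[OF pc] frame_ext_surj[OF qf] by blast
  qed (simp_all add: frame_ext_add frame_ext_Bact)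
qed

end
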